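(* Let $g$ be either $F$, or $F_{\cdot,c}$ for some fixed $c\in\mathbb{C}^d$, or $f$ in the case $s=n$, with respective parameter spaces $\mathbb{C}^r\times\mathbb{C}^d$, $\mathbb{C}^r$, $\mathbb{C}^r$. If $g_{\alpha^*}(x)=0$ has a nondegenerate solution in $(\mathbb{C}^* )^n$ for some parameter value $\alpha^*$, then there is a nonempty Zariski open subset of the parameter space such that for all $\alpha$ in it, all solutions in $(\mathbb{C}^* )^n$ of $g_\alpha(x)=0$ are nondegenerate.
   Context: Let $N\in\mathbb{C}^{s\times r}$ have rank $s$, $W\in\mathbb{C}^{d\times n}$ have rank $d=n-s$, $B\in\mathbb{Z}^{n\times r}$. $\circ$ is the Hadamard product and $x^B\in\mathbb{C}^r$ has $j$-th entry $\prod_i x_i^{b_{ij}}$. $f(\kappa,x)=N(\kappa\circ x^B)$ with parameters $\kappa\in\mathbb{C}^r$; $F(\kappa,c,x)=\begin{pmatrix}f(\kappa,x)\\ Wx-c\end{pmatrix}$ with parameters $(\kappa,c)\in\mathbb{C}^r\times\mathbb{C}^d$; $F_{\cdot,c}(\kappa,x)=F(\kappa,c,x)$ for fixed $c$, with parameters $\kappa$. For a parametric system $g$ with $t$ equations, $g_\alpha=g(\alpha,\cdot)$, and a solution $x^*\in(\mathbb{C}^* )^n$ of $g_\alpha(x)=0$ is nondegenerate if the Jacobian of $g_\alpha$ with respect to $x$ at $x^*$ has rank $t$. *)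

theory Defs
  imports "HOL-Analysis.Analysis"
begin

text \<open>Vectors in C^k are represented as functions nat => complex that vanish
  outside the index range {0..<k}.\<close>

definition cvec :: "nat \<Rightarrow> (nat \<Rightarrow> complex) set" where
  "cvec k = {x. \<forall>i\<ge>k. x i = 0}"

definition torus :: "nat \<Rightarrow> (nat \<Rightarrow> complex) set" where
  "torus n = {x \<in> cvec n. \<forall>i<n. x i \<noteq> 0}"

definition poly_fun :: "nat \<Rightarrow> ((nat \<Rightarrow> complex) \<Rightarrow> complex) \<Rightarrow> bool" where
  "poly_fun m p \<longleftrightarrow> (\<exists>A (c :: (nat \<Rightarrow> nat) \<Rightarrow> complex).
      finite A \<and> (\<forall>a\<in>A. \<forall>i\<ge>m. a i = 0) \<and>
      p = (\<lambda>z. \<Sum>a\<in>A. c a * (\<Prod>i<m. z i ^ a i)))"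

definition zariski_open :: "nat \<Rightarrow> (nat \<Rightarrow> complex) set \<Rightarrow> bool" where
  "zariski_open m U \<longleftrightarrow> (\<exists>P. (\<forall>p\<in>P. poly_fun m p) \<and>
      U = {z \<in> cvec m. \<exists>p\<in>P. p z \<noteq> 0})"

definition full_row_rank :: "nat \<Rightarrow> nat \<Rightarrow> (nat \<Rightarrow> nat \<Rightarrow> complex) \<Rightarrow> bool" where
  "full_row_rank t k M \<longleftrightarrow>
     (\<forall>a. (\<forall>j<k. (\<Sum>i<t. a i * M i j) = 0) \<longrightarrow> (\<forall>i<t. a i = 0))"

definition jac :: "((nat \<Rightarrow> complex) \<Rightarrow> (nat \<Rightarrow> complex) \<Rightarrow> (nat \<Rightarrow> complex))
    \<Rightarrow> (nat \<Rightarrow> complex) \<Rightarrow> (nat \<Rightarrow> complex) \<Rightarrow> nat \<Rightarrow> nat \<Rightarrow> complex" where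
  "jac G \<alpha> x i j = deriv (\<lambda>z. G \<alpha> (x(j := z)) i) (x j)"

definition nondeg_sol :: "nat \<Rightarrow> nat \<Rightarrow>
    ((nat \<Rightarrow> complex) \<Rightarrow> (nat \<Rightarrow> complex) \<Rightarrow> (nat \<Rightarrow> complex))
    \<Rightarrow> (nat \<Rightarrow> complex) \<Rightarrow> (nat \<Rightarrow> complex) \<Rightarrow> bool" where
  "nondeg_sol t n G \<alpha> x \<longleftrightarrow> x \<in> torus n \<and> (\<forall>i<t. G \<alpha> x i = 0) \<and>
      full_row_rank t n (jac G \<alpha> x)"

definition generic_nondeg_property :: "nat \<Rightarrow> nat \<Rightarrow> nat \<Rightarrow>
    ((nat \<Rightarrow> complex) \<Rightarrow> (nat \<Rightarrow> complex) \<Rightarrow> (nat \<Rightarrow> complex)) \<Rightarrow> bool" where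
  "generic_nondeg_property m t n G \<longleftrightarrow>
     ((\<exists>\<alpha>\<in>cvec m. \<exists>x. nondeg_sol t n G \<alpha> x) \<longrightarrow>
      (\<exists>U. zariski_open m U \<and> U \<noteq> {} \<and>
         (\<forall>\<alpha>\<in>U. \<forall>x\<in>torus n. (\<forall>i<t. G \<alpha> x i = 0) \<longrightarrow> nondeg_sol t n G \<alpha> x)))"

definition monvec :: "nat \<Rightarrow> (nat \<Rightarrow> nat \<Rightarrow> int) \<Rightarrow> (nat \<Rightarrow> complex) \<Rightarrow> nat \<Rightarrow> complex" where
  "monvec n B x j = (\<Prod>i<n. x i powi B i j)"

definition fsys :: "nat \<Rightarrow> nat \<Rightarrow> nat \<Rightarrow> (nat \<Rightarrow> nat \<Rightarrow> complex) \<Rightarrow> (nat \<Rightarrow> nat \<Rightarrow> int)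
    \<Rightarrow> (nat \<Rightarrow> complex) \<Rightarrow> (nat \<Rightarrow> complex) \<Rightarrow> nat \<Rightarrow> complex" where
  "fsys s r n N B \<kappa> x i = (if i < s then (\<Sum>j<r. N i j * (\<kappa> j * monvec n B x j)) else 0)"

definition Fsys :: "nat \<Rightarrow> nat \<Rightarrow> nat \<Rightarrow> nat \<Rightarrow> (nat \<Rightarrow> nat \<Rightarrow> complex) \<Rightarrow> (nat \<Rightarrow> nat \<Rightarrow> complex)
    \<Rightarrow> (nat \<Rightarrow> nat \<Rightarrow> int) \<Rightarrow> (nat \<Rightarrow> complex) \<Rightarrow> (nat \<Rightarrow> complex) \<Rightarrow> (nat \<Rightarrow> complex) \<Rightarrow> nat \<Rightarrow> complex" where
  "Fsys s d r n N W B \<kappa> c x i =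
     (if i < s then fsys s r n N B \<kappa> x i
      else if i < s + d then (\<Sum>k<n. W (i - s) k * x k) - c (i - s) else 0)"

end

theory Submission
  imports Defs "HOL-Library.Poly_Mapping" "Jordan_Normal_Form.Determinant"
begin

text \<open>
  Write \<open>v = \<kappa> \<circ> x\<^sup>B\<close>. At a solution \<open>v\<close> lies in \<open>ker N\<close>, so it is a linear function of
  \<open>r - s\<close> free coordinates \<open>Y\<^sub>I\<close>; likewise \<open>x\<close> is either free or, for fixed \<open>c\<close>, an affine
  function of \<open>n - d\<close> coordinates of the fibre \<open>W x = c\<close>. In these at most \<open>m\<close> variables
  (\<open>m\<close> the dimension of the parameter space) the parameters become rational functions
  \<open>\<psi>/h\<close>, with \<open>h\<close> a power of \<open>x\<^sub>1\<cdots>x\<^sub>n\<close>, and degeneracy of the solution \<open>x\<close> is the vanishing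
  of a polynomial \<open>Q\<close>, the determinant of the Jacobian rescaled by \<open>diag x\<close>. The given
  nondegenerate solution shows \<open>Q \<noteq> 0\<close>. On the hypersurface \<open>Q = 0\<close> the \<open>m\<close> functions
  \<open>\<psi>/h\<close> are algebraically dependent: counting monomials in a box, there are more products
  of them of bounded degree than there are polynomials of that degree modulo \<open>Q\<close>. So every
  degenerate parameter is a zero of one nonzero polynomial, whose complement is the
  required Zariski open set.
\<close>

section \<open>Polynomials in finitely many variables\<close>

type_synonym monom = "nat \<Rightarrow>\<^sub>0 nat"
type_synonym mpoly = "monom \<Rightarrow>\<^sub>0 complex"

definition eval_monom :: "(nat \<Rightarrow> complex) \<Rightarrow> monom \<Rightarrow> complex" where
  "eval_monom y a = (\<Prod>i\<in>Poly_Mapping.keys a. y i ^ Poly_Mapping.lookup a i)"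

definition insertion :: "(nat \<Rightarrow> complex) \<Rightarrow> mpoly \<Rightarrow> complex" where
  "insertion y p = (\<Sum>a\<in>Poly_Mapping.keys p. Poly_Mapping.lookup p a * eval_monom y a)"

lemma eval_monom_superset: "finite S \<Longrightarrow> Poly_Mapping.keys a \<subseteq> S \<Longrightarrow> eval_monom y a = (\<Prod>i\<in>S. y i ^ Poly_Mapping.lookup a i)"
  unfolding eval_monom_def by (rule prod.mono_neutral_left) (auto simp: in_keys_iff)

lemma eval_monom_add: "eval_monom y (a + b) = eval_monom y a * eval_monom y b"
proof -
  let ?S = "Poly_Mapping.keys a \<union> Poly_Mapping.keys b"
  have "eval_monom y (a+b) = (\<Prod>i\<in>?S. y i ^ Poly_Mapping.lookup (a+b) i)"
    using keys_add[of a b] by (intro eval_monom_superset) auto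
  also have "\<dots> = (\<Prod>i\<in>?S. y i ^ Poly_Mapping.lookup a i) * (\<Prod>i\<in>?S. y i ^ Poly_Mapping.lookup b i)"
    by (simp add: lookup_add power_add prod.distrib)
  also have "\<dots> = eval_monom y a * eval_monom y b"
    by (subst (1 2) eval_monom_superset[of ?S]) auto
  finally show ?thesis .
qed

lemma eval_monom_zero[simp]: "eval_monom y 0 = 1" by (simp add: eval_monom_def)

lemma insertion_superset: "finite S \<Longrightarrow> Poly_Mapping.keys p \<subseteq> S \<Longrightarrow> insertion y p = (\<Sum>a\<in>S. Poly_Mapping.lookup p a * eval_monom y a)"
  unfolding insertion_def by (rule sum.mono_neutral_left) (auto simp: in_keys_iff)

lemma insertion_add: "insertion y (p + q) = insertion y p + insertion y q"
proof -
  let ?S = "Poly_Mapping.keys p \<union> Poly_Mapping.keys q"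
  have "insertion y (p+q) = (\<Sum>a\<in>?S. Poly_Mapping.lookup (p+q) a * eval_monom y a)"
    using keys_add[of p q] by (intro insertion_superset) auto
  also have "\<dots> = (\<Sum>a\<in>?S. Poly_Mapping.lookup p a * eval_monom y a) + (\<Sum>a\<in>?S. Poly_Mapping.lookup q a * eval_monom y a)"
    by (simp add: lookup_add distrib_right sum.distrib)
  also have "\<dots> = insertion y p + insertion y q"
    by (subst (1 2) insertion_superset[of ?S]) auto
  finally show ?thesis .
qed

lemma insertion_zero[simp]: "insertion y 0 = 0" by (simp add: insertion_def)

lemma insertion_single[simp]: "insertion y (Poly_Mapping.single a c) = c * eval_monom y a"
  by (simp add: insertion_def)

lemma insertion_sum: "insertion y (\<Sum>i\<in>I. f i) = (\<Sum>i\<in>I. insertion y (f i))"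
  by (induction I rule: infinite_finite_induct) (auto simp: insertion_add)

lemma mpoly_sum_single: "(p::mpoly) = (\<Sum>a\<in>Poly_Mapping.keys p. Poly_Mapping.single a (Poly_Mapping.lookup p a))"
proof (rule poly_mapping_eqI)
  fix t
  have "Poly_Mapping.lookup (\<Sum>a\<in>Poly_Mapping.keys p. Poly_Mapping.single a (Poly_Mapping.lookup p a)) t
        = (\<Sum>a\<in>Poly_Mapping.keys p. (Poly_Mapping.lookup p a when a = t))"
    by (simp add: lookup_sum lookup_single)
  also have "\<dots> = Poly_Mapping.lookup p t"
    by (cases "t \<in> Poly_Mapping.keys p") (auto simp: when_def in_keys_iff)
  finally show "Poly_Mapping.lookup p t = Poly_Mapping.lookup (\<Sum>a\<in>Poly_Mapping.keys p. Poly_Mapping.single a (Poly_Mapping.lookup p a)) t" by simp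
qed

lemma insertion_mult: "insertion y (p * q) = insertion y p * insertion y q"
proof -
  have "p * q = (\<Sum>a\<in>Poly_Mapping.keys p. Poly_Mapping.single a (Poly_Mapping.lookup p a)) * (\<Sum>b\<in>Poly_Mapping.keys q. Poly_Mapping.single b (Poly_Mapping.lookup q b))"
    by (subst (1) mpoly_sum_single, subst (2) mpoly_sum_single) simp
  also have "\<dots> = (\<Sum>a\<in>Poly_Mapping.keys p. \<Sum>b\<in>Poly_Mapping.keys q. Poly_Mapping.single (a+b) (Poly_Mapping.lookup p a * Poly_Mapping.lookup q b))"
    by (simp add: sum_distrib_left sum_distrib_right mult_single) (rule sum.swap)
  finally have "insertion y (p*q) = (\<Sum>a\<in>Poly_Mapping.keys p. \<Sum>b\<in>Poly_Mapping.keys q. Poly_Mapping.lookup p a * Poly_Mapping.lookup q b * (eval_monom y a * eval_monom y b))"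
    by (simp add: insertion_sum eval_monom_add)
  also have "\<dots> = (\<Sum>a\<in>Poly_Mapping.keys p. \<Sum>b\<in>Poly_Mapping.keys q. (Poly_Mapping.lookup p a * eval_monom y a) * (Poly_Mapping.lookup q b * eval_monom y b))"
    by (simp add: mult_ac)
  also have "\<dots> = insertion y p * insertion y q"
    by (simp add: insertion_def sum_product)
  finally show ?thesis .
qed

lemma insertion_one[simp]: "insertion y 1 = 1"
  by (simp add: insertion_def)

lemma insertion_power: "insertion y (p ^ n) = insertion y p ^ n"
  by (induction n) (auto simp: insertion_mult)

lemma insertion_prod: "insertion y (\<Prod>i\<in>I. f i) = (\<Prod>i\<in>I. insertion y (f i))"
  by (induction I rule: infinite_finite_induct) (auto simp: insertion_mult)

definition mvar :: "nat \<Rightarrow> mpoly" where "mvar i = Poly_Mapping.single (Poly_Mapping.single i 1) 1"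

definition mconst :: "complex \<Rightarrow> mpoly" where "mconst c = Poly_Mapping.single 0 c"

lemma insertion_mvar[simp]: "insertion y (mvar i) = y i" by (simp add: mvar_def eval_monom_def)

lemma insertion_mconst[simp]: "insertion y (mconst c) = c" by (simp add: mconst_def)

lemma single_eq_mconst_mult: "Poly_Mapping.single b k = mconst k * (Poly_Mapping.single b 1 :: mpoly)"
  by (simp add: mconst_def mult_single)

lemma lookup_mconst_mult: "Poly_Mapping.lookup (mconst k * p) t = k * Poly_Mapping.lookup p t"
proof -
  have "mconst k * p = (\<Sum>a\<in>Poly_Mapping.keys p. Poly_Mapping.single a (k * Poly_Mapping.lookup p a))"
    by (subst mpoly_sum_single) (simp add: mconst_def sum_distrib_left mult_single)
  then have "Poly_Mapping.lookup (mconst k * p) t = (\<Sum>a\<in>Poly_Mapping.keys p. (k * Poly_Mapping.lookup p a when a = t))"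
    by (simp add: lookup_sum lookup_single)
  also have "\<dots> = k * Poly_Mapping.lookup p t"
    by (cases "t \<in> Poly_Mapping.keys p") (auto simp: when_def in_keys_iff)
  finally show ?thesis .
qed

definition vars_in :: "nat set \<Rightarrow> mpoly \<Rightarrow> bool" where
  "vars_in V p \<longleftrightarrow> (\<forall>a\<in>Poly_Mapping.keys p. Poly_Mapping.keys a \<subseteq> V)"

definition box_monoms :: "nat \<Rightarrow> nat set \<Rightarrow> monom set" where
  "box_monoms K V = {a. Poly_Mapping.keys a \<subseteq> V \<and> (\<forall>i. Poly_Mapping.lookup a i \<le> K)}"

definition in_box :: "nat \<Rightarrow> nat set \<Rightarrow> mpoly \<Rightarrow> bool" where
  "in_box K V p \<longleftrightarrow> Poly_Mapping.keys p \<subseteq> box_monoms K V"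

lemma vars_in_add: "vars_in V p \<Longrightarrow> vars_in V q \<Longrightarrow> vars_in V (p + q)"
  using keys_add[of p q] by (auto simp: vars_in_def)

lemma vars_in_mult: "vars_in V p \<Longrightarrow> vars_in V q \<Longrightarrow> vars_in V (p * q)"
proof (unfold vars_in_def, intro ballI)
  fix c assume p: "\<forall>a\<in>Poly_Mapping.keys p. Poly_Mapping.keys a \<subseteq> V" and q: "\<forall>a\<in>Poly_Mapping.keys q. Poly_Mapping.keys a \<subseteq> V"
    and c: "c \<in> Poly_Mapping.keys (p * q)"
  then obtain a b where ab: "c = a + b" "a \<in> Poly_Mapping.keys p" "b \<in> Poly_Mapping.keys q" using keys_mult by blast
  then show "Poly_Mapping.keys c \<subseteq> V" using keys_add[of a b] p q by blast
qed

lemma vars_in_one: "vars_in V 1" by (simp add: vars_in_def)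

lemma vars_in_zero: "vars_in V 0" by (simp add: vars_in_def)

lemma vars_in_mconst: "vars_in V (mconst c)" by (simp add: vars_in_def mconst_def)

lemma vars_in_mvar: "i \<in> V \<Longrightarrow> vars_in V (mvar i)" by (simp add: vars_in_def mvar_def)

lemma vars_in_power: "vars_in V p \<Longrightarrow> vars_in V (p ^ n)"
  by (induction n) (auto intro: vars_in_mult vars_in_one)

lemma vars_in_prod: "(\<And>i. i \<in> I \<Longrightarrow> vars_in V (f i)) \<Longrightarrow> vars_in V (\<Prod>i\<in>I. f i)"
  by (induction I rule: infinite_finite_induct) (auto intro: vars_in_mult vars_in_one)

lemma vars_in_sum: "(\<And>i. i \<in> I \<Longrightarrow> vars_in V (f i)) \<Longrightarrow> vars_in V (\<Sum>i\<in>I. f i)"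
  by (induction I rule: infinite_finite_induct) (auto intro: vars_in_add vars_in_zero)

lemma in_box_mono: "in_box K V p \<Longrightarrow> K \<le> K' \<Longrightarrow> in_box K' V p"
  unfolding in_box_def box_monoms_def subset_iff mem_Collect_eq by (meson order_trans)

lemma in_box_mult:
  assumes p: "in_box K1 V p" and q: "in_box K2 V q"
  shows "in_box (K1 + K2) V (p * q)"
  unfolding in_box_def
proof
  fix c assume "c \<in> Poly_Mapping.keys (p * q)"
  then obtain a b where c: "c = a + b" and "a \<in> box_monoms K1 V" "b \<in> box_monoms K2 V"
    using keys_mult p q unfolding in_box_def by blast
  then show "c \<in> box_monoms (K1 + K2) V"
    using keys_add[of a b] by (auto simp: box_monoms_def lookup_add add_mono)
qed

lemma in_box_one: "in_box 0 V 1" by (simp add: in_box_def box_monoms_def)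

lemma in_box_power: "in_box K V p \<Longrightarrow> in_box (n * K) V (p ^ n)"
  by (induction n) (auto intro: in_box_one dest: in_box_mult)

lemma in_box_prod: "(\<And>i. i \<in> I \<Longrightarrow> in_box (K i) V (f i)) \<Longrightarrow> in_box (\<Sum>i\<in>I. K i) V (\<Prod>i\<in>I. f i)"
  by (induction I rule: infinite_finite_induct) (auto intro: in_box_one in_box_mult)

lemma vars_in_imp_in_box: "vars_in V p \<Longrightarrow> \<exists>K. in_box K V p"
proof -
  assume v: "vars_in V p"
  let ?K = "\<Sum>a\<in>Poly_Mapping.keys p. \<Sum>i\<in>Poly_Mapping.keys a. Poly_Mapping.lookup a i"
  have "Poly_Mapping.lookup a i \<le> ?K" if "a \<in> Poly_Mapping.keys p" for a i
  proof (cases "i \<in> Poly_Mapping.keys a")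
    case True
    have "Poly_Mapping.lookup a i \<le> (\<Sum>i\<in>Poly_Mapping.keys a. Poly_Mapping.lookup a i)" by (rule member_le_sum) (use True in auto)
    also have "\<dots> \<le> ?K" by (rule member_le_sum[where f = "\<lambda>a. \<Sum>i\<in>Poly_Mapping.keys a. Poly_Mapping.lookup a i"]) (use that in auto)
    finally show ?thesis .
  next
    case False then show ?thesis by (simp add: in_keys_iff)
  qed
  with v show ?thesis by (intro exI[of _ ?K]) (auto simp: in_box_def box_monoms_def vars_in_def)
qed

lemma in_box_common_bound:
  assumes "finite J" and "\<And>j. j \<in> J \<Longrightarrow> vars_in V (f j)"
  shows "\<exists>E. \<forall>j\<in>J. in_box E V (f j)"
proof -
  have "\<forall>j\<in>J. \<exists>K. in_box K V (f j)"
    using assms(2) vars_in_imp_in_box by blast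
  from bchoice[OF this] obtain K where K: "\<forall>j\<in>J. in_box (K j) V (f j)"
    by blast
  have "in_box (\<Sum>j\<in>J. K j) V (f j)" if "j \<in> J" for j
    by (rule in_box_mono[OF K[rule_format, OF that]]) (use assms(1) that in \<open>auto intro!: member_le_sum\<close>)
  then show ?thesis by blast
qed

lemma lookup_in_box:
  assumes "in_box K V p" and "Poly_Mapping.lookup p t \<noteq> 0"
  shows "t \<in> box_monoms K V"
  using assms by (auto simp: in_box_def box_monoms_def in_keys_iff)

lemma in_box_single: "b \<in> box_monoms K V \<Longrightarrow> in_box K V (Poly_Mapping.single b c)"
  by (simp add: in_box_def box_monoms_def)

section \<open>Algebraic dependence on a hypersurface\<close>

lemma polyfun_coeff_last_var_eq_0:
  fixes c :: "(nat \<Rightarrow> nat) \<Rightarrow> complex"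
  assumes fin: "finite A" and zero: "\<forall>z. (\<Sum>a\<in>A. c a * (\<Prod>i<Suc m. z i ^ a i)) = 0"
  shows "(\<Sum>a\<in>{a\<in>A. a m = k}. c a * (\<Prod>i<m. z i ^ a i)) = 0"
proof -
  define K where "K = Max ((\<lambda>a. a m) ` A)"
  have K: "a m \<le> K" if "a \<in> A" for a
    unfolding K_def using fin that by auto
  define cc where "cc k = (\<Sum>a\<in>{a\<in>A. a m = k}. c a * (\<Prod>i<m. z i ^ a i))" for k
  have "(\<Sum>k\<le>K. cc k * w ^ k) = 0" for w
  proof -
    have "0 = (\<Sum>a\<in>A. c a * (\<Prod>i<Suc m. (z(m := w)) i ^ a i))"
      using zero by metis
    also have "\<dots> = (\<Sum>a\<in>A. c a * (\<Prod>i<m. z i ^ a i) * w ^ a m)"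
      by (intro sum.cong) (auto simp: mult.assoc)
    also have "\<dots> = (\<Sum>k\<le>K. \<Sum>a\<in>{a\<in>A. a m = k}. c a * (\<Prod>i<m. z i ^ a i) * w ^ a m)"
      by (rule sum.group[symmetric]) (use fin K in auto)
    also have "\<dots> = (\<Sum>k\<le>K. cc k * w ^ k)"
      unfolding cc_def by (intro sum.cong refl) (auto simp: sum_distrib_right)
    finally show ?thesis by simp
  qed
  then have "\<forall>k\<le>K. cc k = 0"
    using polyfun_eq_0[of cc K] by blast
  moreover have "cc k = 0" if "\<not> k \<le> K"
    using that K by (auto simp: cc_def intro!: sum.neutral)
  ultimately show ?thesis
    by (cases "k \<le> K") (auto simp: cc_def)
qed

lemma multivariate_polyfun_eq_0:
  fixes c :: "(nat \<Rightarrow> nat) \<Rightarrow> complex"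
  assumes "finite A" "\<forall>a\<in>A. \<forall>i\<ge>m. a i = 0"
    and "\<forall>z. (\<Sum>a\<in>A. c a * (\<Prod>i<m. z i ^ a i)) = 0"
  shows "\<forall>a\<in>A. c a = 0"
  using assms
proof (induction m arbitrary: A c)
  case 0
  show ?case
  proof
    fix a assume a: "a \<in> A"
    have "A \<subseteq> {\<lambda>_. 0}" using 0(2) by (auto simp: fun_eq_iff)
    with a have A: "A = {a}" by auto
    from 0(3) show "c a = 0" by (simp add: A)
  qed
next
  case (Suc m)
  show ?case
  proof
    fix a assume aA: "a \<in> A"
    \<comment> \<open>Induction on the coefficients of \<open>z\<^sub>m\<^sup>k\<close>, \<open>k = a m\<close>, with \<open>z\<^sub>m\<close> removed from the exponents.\<close>
    define Ak where "Ak = {b\<in>A. b m = a m}"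
    let ?B = "(\<lambda>b. b(m := 0)) ` Ak"
    let ?cc = "\<lambda>b. c (b(m := a m))"
    have inj: "inj_on (\<lambda>b. b(m := 0)) Ak"
      by (rule inj_onI) (auto simp: Ak_def fun_eq_iff split: if_splits, metis)
    have "\<forall>b\<in>?B. ?cc b = 0"
    proof (rule Suc.IH)
      show "finite ?B" using Suc.prems(1) by (auto simp: Ak_def)
      show "\<forall>b\<in>?B. \<forall>i\<ge>m. b i = 0" using Suc.prems(2) by (auto simp: Ak_def)
      show "\<forall>z. (\<Sum>b\<in>?B. ?cc b * (\<Prod>i<m. z i ^ b i)) = 0"
      proof
        fix z
        have "(\<Sum>b\<in>?B. ?cc b * (\<Prod>i<m. z i ^ b i)) = (\<Sum>b\<in>Ak. ?cc (b(m:=0)) * (\<Prod>i<m. z i ^ (b(m:=0)) i))"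
          by (rule sum.reindex[OF inj, unfolded comp_def])
        also have "\<dots> = (\<Sum>b\<in>Ak. c b * (\<Prod>i<m. z i ^ b i))"
        proof (intro sum.cong refl)
          fix b assume "b \<in> Ak"
          then have "(b(m:=0))(m := a m) = b" by (simp add: Ak_def fun_eq_iff)
          moreover have "(\<Prod>i<m. z i ^ (b(m:=0)) i) = (\<Prod>i<m. z i ^ b i)" by (intro prod.cong) auto
          ultimately show "?cc (b(m:=0)) * (\<Prod>i<m. z i ^ (b(m:=0)) i) = c b * (\<Prod>i<m. z i ^ b i)"
            by simp
        qed
        also have "\<dots> = 0"
          unfolding Ak_def using polyfun_coeff_last_var_eq_0[OF Suc.prems(1,3)] .
        finally show "(\<Sum>b\<in>?B. ?cc b * (\<Prod>i<m. z i ^ b i)) = 0" .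
      qed
    qed
    moreover have "a(m := 0) \<in> ?B" using aA by (auto simp: Ak_def)
    ultimately have "?cc (a(m := 0)) = 0" by blast
    then show "c a = 0" by simp
  qed
qed

lemma nontrivial_linear_relation:
  fixes f :: "'a \<Rightarrow> 'b \<Rightarrow> complex"
  assumes "finite T" "finite S" "card T < card S" "\<forall>a\<in>S. \<forall>t. t \<notin> T \<longrightarrow> f a t = 0"
  shows "\<exists>c. (\<exists>a\<in>S. c a \<noteq> 0) \<and> (\<forall>t. (\<Sum>a\<in>S. c a * f a t) = 0)"
  using assms
proof (induction T arbitrary: S f rule: finite_induct)
  case empty
  then obtain a0 where a0: "a0 \<in> S" by fastforce
  show ?case
    by (rule exI[of _ "\<lambda>a. if a = a0 then 1 else 0"]) (use a0 empty in \<open>auto intro!: sum.neutral\<close>)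
next
  case (insert t0 T)
  show ?case
  proof (cases "\<forall>a\<in>S. f a t0 = 0")
    case True
    show ?thesis
    proof (rule insert.IH)
      show "finite S" "card T < card S" using insert by auto
      show "\<forall>a\<in>S. \<forall>t. t \<notin> T \<longrightarrow> f a t = 0"
      proof (intro ballI allI impI)
        fix a t assume "a \<in> S" "t \<notin> T"
        then show "f a t = 0" using insert.prems(3) True by (cases "t = t0") auto
      qed
    qed
  next
    case False
    then obtain a0 where a0: "a0 \<in> S" "f a0 t0 \<noteq> 0" by auto
    define g where "g a t = f a t - f a t0 / f a0 t0 * f a0 t" for a t
    have "\<exists>c. (\<exists>a\<in>S - {a0}. c a \<noteq> 0) \<and> (\<forall>t. (\<Sum>a\<in>S - {a0}. c a * g a t) = 0)"
    proof (rule insert.IH)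
      show "finite (S - {a0})" using insert by auto
      show "card T < card (S - {a0})" using insert a0 by (auto simp: card_Diff_singleton)
      show "\<forall>a\<in>S - {a0}. \<forall>t. t \<notin> T \<longrightarrow> g a t = 0"
      proof (intro ballI allI impI)
        fix a t assume "a \<in> S - {a0}" "t \<notin> T"
        then show "g a t = 0" using insert.prems(3) a0 by (cases "t = t0") (auto simp: g_def)
      qed
    qed
    then obtain c' where c': "\<exists>a\<in>S - {a0}. c' a \<noteq> 0" "\<And>t. (\<Sum>a\<in>S - {a0}. c' a * g a t) = 0" by blast
    define c where "c a = (if a = a0 then - (\<Sum>b\<in>S - {a0}. c' b * f b t0) / f a0 t0 else c' a)" for a
    show ?thesis
    proof (intro exI conjI allI)
      show "\<exists>a\<in>S. c a \<noteq> 0" using c'(1) by (auto simp: c_def)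
      fix t
      have fS: "finite S" using insert by auto
      have "(\<Sum>a\<in>S. c a * f a t) = c a0 * f a0 t + (\<Sum>a\<in>S - {a0}. c' a * f a t)"
        using a0 fS by (simp add: sum.remove c_def)
      also have "(\<Sum>a\<in>S - {a0}. c' a * f a t) = (\<Sum>a\<in>S - {a0}. c' a * g a t + c' a * f a t0 * (f a0 t / f a0 t0))"
        by (intro sum.cong refl) (simp add: g_def algebra_simps)
      also have "\<dots> = (\<Sum>a\<in>S - {a0}. c' a * g a t) + (\<Sum>b\<in>S - {a0}. c' b * f b t0) * (f a0 t / f a0 t0)"
        by (simp add: sum.distrib sum_distrib_right sum_divide_distrib)
      finally show "(\<Sum>a\<in>S. c a * f a t) = 0" using c'(2)[of t] a0(2) by (simp add: c_def field_simps)
    qed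
  qed
qed

definition exponent_box :: "nat \<Rightarrow> nat \<Rightarrow> (nat \<Rightarrow> nat) set" where
  "exponent_box D m = {a. (\<forall>i. a i \<le> D) \<and> (\<forall>i\<ge>m. a i = 0)}"

lemma box_monoms_bij:
  assumes "finite V"
  shows "bij_betw (\<lambda>a. restrict (Poly_Mapping.lookup a) V) (box_monoms K V) (PiE V (\<lambda>_. {..K}))"
proof (rule bij_betwI[where g = "\<lambda>f. Abs_poly_mapping (\<lambda>i. if i \<in> V then f i else 0)"])
  have fin: "finite {i. (if i \<in> V then f i else 0) \<noteq> (0::nat)}" for f
    by (rule finite_subset[OF _ assms]) auto
  have L: "Poly_Mapping.lookup (Abs_poly_mapping (\<lambda>i. if i \<in> V then f i else 0)) = (\<lambda>i. if i \<in> V then f i else 0)" for f :: "nat \<Rightarrow> nat"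
    by (rule lookup_Abs_poly_mapping[OF fin])
  show "(\<lambda>a. restrict (Poly_Mapping.lookup a) V) \<in> box_monoms K V \<rightarrow> (V \<rightarrow>\<^sub>E {..K})"
    unfolding box_monoms_def by (auto simp: restrict_PiE_iff)
  show "(\<lambda>f. Abs_poly_mapping (\<lambda>i. if i \<in> V then f i else 0)) \<in> (V \<rightarrow>\<^sub>E {..K}) \<rightarrow> box_monoms K V"
  proof
    fix f assume f: "f \<in> V \<rightarrow>\<^sub>E {..K}"
    show "Abs_poly_mapping (\<lambda>i. if i \<in> V then f i else 0) \<in> box_monoms K V"
      unfolding box_monoms_def mem_Collect_eq L
    proof
      show "Poly_Mapping.keys (Abs_poly_mapping (\<lambda>i. if i \<in> V then f i else 0)) \<subseteq> V"
        by (auto simp: in_keys_iff L split: if_splits)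
      show "\<forall>i. (if i \<in> V then f i else 0) \<le> K" using f by (auto simp: PiE_iff)
    qed
  qed
  show "Abs_poly_mapping (\<lambda>i. if i \<in> V then restrict (Poly_Mapping.lookup a) V i else 0) = a" if "a \<in> box_monoms K V" for a
  proof (rule poly_mapping_eqI)
    fix k
    show "Poly_Mapping.lookup (Abs_poly_mapping (\<lambda>i. if i \<in> V then restrict (Poly_Mapping.lookup a) V i else 0)) k = Poly_Mapping.lookup a k"
      unfolding L using that by (auto simp: box_monoms_def in_keys_iff)
  qed
  show "restrict (Poly_Mapping.lookup (Abs_poly_mapping (\<lambda>i. if i \<in> V then f i else 0))) V = f" if "f \<in> V \<rightarrow>\<^sub>E {..K}" for f
  proof -
    have "restrict (\<lambda>i. if i \<in> V then f i else 0) V = restrict f V" by (rule restrict_ext) simp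
    also have "\<dots> = f" by (rule PiE_restrict[OF that])
    finally show ?thesis unfolding L .
  qed
qed

lemma box_monoms_card: "finite V \<Longrightarrow> card (box_monoms K V) = (K+1) ^ card V"
  using bij_betw_same_card[OF box_monoms_bij[of V K]] by (simp add: card_PiE)

lemma box_monoms_finite: "finite V \<Longrightarrow> finite (box_monoms K V)"
  using bij_betw_finite[OF box_monoms_bij[of V K]] by (simp add: finite_PiE)

lemma exponent_box_bij:
  shows "bij_betw (\<lambda>a. restrict a {..<m}) (exponent_box D m) (PiE {..<m} (\<lambda>_. {..D}))"
proof (rule bij_betwI[where g = "\<lambda>f i. if i < m then f i else 0"])
  show "(\<lambda>a. restrict a {..<m}) \<in> exponent_box D m \<rightarrow> ({..<m} \<rightarrow>\<^sub>E {..D})"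
    unfolding exponent_box_def by (auto simp: restrict_PiE_iff)
  show "(\<lambda>f i. if i < m then f i else 0) \<in> ({..<m} \<rightarrow>\<^sub>E {..D}) \<rightarrow> exponent_box D m"
  proof
    fix f assume f: "f \<in> {..<m} \<rightarrow>\<^sub>E {..D}"
    show "(\<lambda>i. if i < m then f i else 0) \<in> exponent_box D m"
      unfolding exponent_box_def using f by (auto simp: PiE_iff)
  qed
  show "(\<lambda>i. if i < m then restrict a {..<m} i else 0) = a" if "a \<in> exponent_box D m" for a
  proof
    fix i show "(if i < m then restrict a {..<m} i else 0) = a i" using that by (auto simp: exponent_box_def)
  qed
  show "restrict (\<lambda>i. if i < m then f i else 0) {..<m} = f" if "f \<in> {..<m} \<rightarrow>\<^sub>E {..D}" for f
  proof -
    have "restrict (\<lambda>i. if i < m then f i else 0) {..<m} = restrict f {..<m}" by (rule restrict_ext) simp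
    also have "\<dots> = f" by (rule PiE_restrict[OF that])
    finally show ?thesis .
  qed
qed

lemma exponent_box_card: "card (exponent_box D m) = (D+1) ^ m"
  using bij_betw_same_card[OF exponent_box_bij[of m D]] by (simp add: card_PiE)

lemma exponent_box_finite: "finite (exponent_box D m)"
  using bij_betw_finite[OF exponent_box_bij[of m D]] by (simp add: finite_PiE)

lemma power_mean_value_bound: "(y::nat) \<le> x \<Longrightarrow> x ^ n \<le> y ^ n + n * (x - y) * x ^ (n - 1)"
proof (induction n)
  case 0 then show ?case by simp
next
  case (Suc n)
  have "x ^ Suc n = x * x ^ n" by simp
  also have "\<dots> \<le> x * (y ^ n + n * (x - y) * x ^ (n - 1))" using Suc by simp
  also have "\<dots> = x * y ^ n + n * (x - y) * (x * x ^ (n - 1))" by (simp add: algebra_simps)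
  also have "n * (x - y) * (x * x ^ (n - 1)) = n * (x - y) * x ^ n"
    by (cases n) auto
  finally have 1: "x ^ Suc n \<le> x * y ^ n + n * (x - y) * x ^ n" .
  have "x = y + (x - y)" using Suc.prems by simp
  then have "x * y ^ n = y * y ^ n + (x - y) * y ^ n" by (metis distrib_right)
  also have "(x - y) * y ^ n \<le> (x - y) * x ^ n"
    using Suc.prems by (simp add: power_mono)
  finally have 2: "x * y ^ n \<le> y ^ Suc n + (x - y) * x ^ n" by simp
  have 3: "Suc n * (x - y) * x ^ (Suc n - 1) = (x - y) * x ^ n + n * (x - y) * x ^ n" by (simp add: distrib_right)
  show ?case using 1 2 3 by linarith
qed

text \<open>Since \<open>m' \<le> m\<close>, the difference \<open>(E m D + q + 1)\<^sup>m\<^sup>' - (E m D + 1)\<^sup>m\<^sup>'\<close> is of order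
  \<open>D\<^sup>m\<^sup>-\<^sup>1\<close>, so it is eventually smaller than \<open>(D + 1)\<^sup>m\<close>.\<close>

lemma box_count_inequality:
  fixes m m' E q :: nat
  assumes "m' \<le> m"
  shows "\<exists>D. (E * (m * D) + q + 1) ^ m' < (D + 1) ^ m + (E * (m * D) + 1) ^ m'"
proof (cases "m' = 0")
  case True then show ?thesis by simp
next
  case False
  then have m1: "m \<ge> 1" using assms by simp
  define C where "C = E * m + q + 1"
  define D where "D = m * q * C ^ (m - 1) + 1"
  define A where "A = E * (m * D) + 1"
  have D1: "D \<ge> 1" by (simp add: D_def)
  have "(A + q) ^ m' \<le> A ^ m' + m' * q * (A + q) ^ (m' - 1)"
    using power_mean_value_bound[of A "A + q" m'] by simp
  also have "(A + q) ^ (m' - 1) \<le> (C * D) ^ (m - 1)"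
  proof -
    have h1: "q + 1 \<le> (q + 1) * D" by (metis D1 mult.right_neutral mult_le_mono2)
    have "A + q = E * m * D + (q + 1)" by (simp add: A_def)
    also have "\<dots> \<le> E * m * D + (q + 1) * D" using h1 by simp
    also have "\<dots> = C * D" by (simp add: C_def algebra_simps)
    finally have "A + q \<le> C * D" .
    then have "(A + q) ^ (m' - 1) \<le> (C * D) ^ (m' - 1)" by (simp add: power_mono)
    also have "\<dots> \<le> (C * D) ^ (m - 1)"
      using assms D1 by (intro power_increasing) (auto simp: C_def)
    finally show ?thesis .
  qed
  then have "m' * q * (A + q) ^ (m' - 1) \<le> m * q * (C * D) ^ (m - 1)"
    using assms by (intro mult_mono) auto
  also have "\<dots> = (m * q * C ^ (m - 1)) * D ^ (m - 1)" by (simp add: power_mult_distrib mult_ac)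
  also have "\<dots> = (D - 1) * D ^ (m - 1)" by (simp add: D_def)
  also have "\<dots> < D * D ^ (m - 1)"
  proof (rule mult_less_mono1)
    show "D - 1 < D" using D1 by simp
    show "0 < D ^ (m - 1)" using D1 by simp
  qed
  also have "D * D ^ (m - 1) = D ^ m" using m1 by (cases m) auto
  also have "\<dots> \<le> (D + 1) ^ m" by (simp add: power_mono)
  finally have "(A + q) ^ m' < A ^ m' + (D + 1) ^ m" by simp
  then show ?thesis by (intro exI[of _ D]) (simp add: A_def add.commute add.left_commute)
qed

lemma lookup_sum_single:
  "finite B \<Longrightarrow> Poly_Mapping.lookup (\<Sum>b\<in>B. Poly_Mapping.single b (d b)) t = (if t \<in> B then d t else 0)"
  by (simp add: lookup_sum lookup_single when_def)

lemma mpoly_linear_relation: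
  fixes g :: "'a \<Rightarrow> mpoly"
  assumes T: "finite T" and V: "finite V" and g: "\<And>x. x \<in> T \<Longrightarrow> in_box K V (g x)"
    and count: "card (box_monoms K V) < card T"
  shows "\<exists>c. (\<exists>x\<in>T. c x \<noteq> 0) \<and> (\<Sum>x\<in>T. mconst (c x) * g x) = 0"
proof -
  have "\<forall>x\<in>T. \<forall>t. t \<notin> box_monoms K V \<longrightarrow> Poly_Mapping.lookup (g x) t = 0"
    using g lookup_in_box by blast
  from nontrivial_linear_relation[OF box_monoms_finite[OF V] T count this]
  obtain c where c: "\<exists>x\<in>T. c x \<noteq> 0"
    and rel: "\<And>t. (\<Sum>x\<in>T. c x * Poly_Mapping.lookup (g x) t) = 0"
    by blast
  have "(\<Sum>x\<in>T. mconst (c x) * g x) = 0"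
    by (rule poly_mapping_eqI) (simp add: lookup_sum lookup_mconst_mult rel)
  with c show ?thesis by blast
qed

lemma exists_combination_dvd:
  fixes g :: "'a \<Rightarrow> mpoly" and Q :: mpoly
  assumes S: "finite S" and V: "finite V"
    and g: "\<And>a. a \<in> S \<Longrightarrow> in_box K V (g a)" and Q: "in_box q V Q" "Q \<noteq> 0"
    and count: "(K + q + 1) ^ card V < card S + (K + 1) ^ card V"
  shows "\<exists>c. (\<exists>a\<in>S. c a \<noteq> 0) \<and> Q dvd (\<Sum>a\<in>S. mconst (c a) * g a)"
proof -
  let ?B = "box_monoms K V"
  \<comment> \<open>The \<open>g a\<close> together with the multiples \<open>Q \<cdot> b\<close> of the monomials \<open>b\<close> of the box.\<close>
  define T where "T = Inl ` S \<union> Inr ` ?B"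
  define G where "G x = (case x of Inl a \<Rightarrow> g a | Inr b \<Rightarrow> Q * Poly_Mapping.single b 1)" for x
  have finB: "finite ?B" by (rule box_monoms_finite[OF V])
  have finT: "finite T" unfolding T_def using S finB by auto
  have "card T = card S + card ?B"
    unfolding T_def using S finB by (subst card_Un_disjoint) (auto simp: card_image)
  then have countT: "card (box_monoms (K + q) V) < card T"
    using count by (simp add: box_monoms_card[OF V])
  have G_box: "in_box (K + q) V (G x)" if "x \<in> T" for x
  proof (cases x)
    case (Inl a)
    with that have "a \<in> S" by (auto simp: T_def)
    then show ?thesis using in_box_mono[OF g, of a "K + q"] Inl by (simp add: G_def)
  next
    case (Inr b)
    with that have "b \<in> ?B" by (auto simp: T_def)
    then have "in_box K V (Poly_Mapping.single b 1)" by (rule in_box_single)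
    from in_box_mult[OF Q(1) this] show ?thesis using Inr by (simp add: G_def add.commute)
  qed
  obtain c where c: "\<exists>x\<in>T. c x \<noteq> 0" and rel: "(\<Sum>x\<in>T. mconst (c x) * G x) = 0"
    using mpoly_linear_relation[where g = G, OF finT V G_box countT] by blast
  define P where "P = (\<Sum>a\<in>S. mconst (c (Inl a)) * g a)"
  define R where "R = (\<Sum>b\<in>?B. Poly_Mapping.single b (c (Inr b)))"
  have single: "Q * Poly_Mapping.single b (c (Inr b)) = mconst (c (Inr b)) * (Q * Poly_Mapping.single b 1)" for b
    by (subst single_eq_mconst_mult) (simp add: mult.left_commute)
  have "(\<Sum>x\<in>T. mconst (c x) * G x) = (\<Sum>x\<in>Inl ` S. mconst (c x) * G x) + (\<Sum>x\<in>Inr ` ?B. mconst (c x) * G x)"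
    unfolding T_def by (rule sum.union_disjoint) (use S finB in auto)
  also have "\<dots> = P + (\<Sum>b\<in>?B. mconst (c (Inr b)) * (Q * Poly_Mapping.single b 1))"
    by (simp add: sum.reindex G_def P_def)
  also have "(\<Sum>b\<in>?B. mconst (c (Inr b)) * (Q * Poly_Mapping.single b 1)) = Q * R"
    unfolding R_def sum_distrib_left by (rule sum.cong[OF refl single[symmetric]])
  finally have PQR: "P + Q * R = 0"
    using rel by simp
  have "\<exists>a\<in>S. c (Inl a) \<noteq> 0"
  proof (rule ccontr)
    assume "\<not> ?thesis"
    then have "P = 0" by (simp add: P_def mconst_def)
    then have "R = 0" using PQR Q(2) by simp
    moreover have "Poly_Mapping.lookup R b = c (Inr b)" if "b \<in> ?B" for b
      using that by (simp add: R_def lookup_sum_single[OF finB])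
    ultimately have "c (Inr b) = 0" if "b \<in> ?B" for b
      using that by simp
    with \<open>\<not> ?thesis\<close> c show False by (auto simp: T_def)
  qed
  moreover have "P = - (Q * R)"
    using PQR by (rule eq_neg_iff_add_eq_0[THEN iffD2])
  then have "Q dvd P" by simp
  ultimately show ?thesis
    unfolding P_def by (intro exI[of _ "\<lambda>a. c (Inl a)"] conjI)
qed

lemma prod_power_homogenize:
  fixes H :: "'a :: field" and u :: "nat \<Rightarrow> 'a"
  assumes "H \<noteq> 0" and "(\<Sum>j<m. a j) \<le> L"
  shows "(\<Prod>j<m. u j ^ a j) * H ^ (L - (\<Sum>j<m. a j)) = H ^ L * (\<Prod>j<m. (u j / H) ^ a j)"
proof -
  have "H ^ L = (\<Prod>j<m. H ^ a j) * H ^ (L - (\<Sum>j<m. a j))"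
    using assms(2) by (simp flip: power_sum power_add)
  moreover have "(\<Prod>j<m. (u j / H) ^ a j) * (\<Prod>j<m. H ^ a j) = (\<Prod>j<m. u j ^ a j)"
    using assms(1) by (simp add: power_divide flip: prod.distrib)
  ultimately show ?thesis
    by (simp add: mult_ac)
qed

lemma in_box_homogenized_monomial:
  assumes "\<forall>j<m. in_box E V (\<psi> j)" and "in_box E V h" and "(\<Sum>j<m. a j) \<le> L"
  shows "in_box (E * L) V ((\<Prod>j<m. \<psi> j ^ a j) * h ^ (L - (\<Sum>j<m. a j)))"
proof -
  have "in_box (\<Sum>j<m. a j * E) V (\<Prod>j<m. \<psi> j ^ a j)"
    by (rule in_box_prod) (use assms(1) in \<open>simp add: in_box_power\<close>)
  from in_box_mult[OF this in_box_power[OF assms(2)]]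
  have "in_box ((\<Sum>j<m. a j * E) + (L - (\<Sum>j<m. a j)) * E) V ((\<Prod>j<m. \<psi> j ^ a j) * h ^ (L - (\<Sum>j<m. a j)))" .
  moreover have "(\<Sum>j<m. a j * E) + (L - (\<Sum>j<m. a j)) * E = ((\<Sum>j<m. a j) + (L - (\<Sum>j<m. a j))) * E"
    by (simp add: sum_distrib_right add_mult_distrib)
  moreover have "\<dots> = E * L"
    using assms(3) by simp
  ultimately show ?thesis by simp
qed

lemma rational_functions_dependent_on_hypersurface:
  fixes \<psi> :: "nat \<Rightarrow> mpoly" and h Q :: mpoly
  assumes V: "finite V" "card V \<le> m"
    and v\<psi>: "\<forall>j<m. vars_in V (\<psi> j)" and vh: "vars_in V h" and vQ: "vars_in V Q"
    and Q0: "Q \<noteq> 0"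
  shows "\<exists>A c. finite A \<and> (\<forall>a\<in>A. \<forall>i\<ge>m. a i = 0) \<and> (\<exists>a\<in>A. c a \<noteq> 0) \<and>
     (\<forall>y. insertion y Q = 0 \<longrightarrow> insertion y h \<noteq> 0 \<longrightarrow>
        (\<Sum>a\<in>A. c a * (\<Prod>i<m. (insertion y (\<psi> i) / insertion y h) ^ a i)) = 0)"
proof -
  obtain E\<^sub>\<psi> where E\<psi>: "\<forall>j\<in>{..<m}. in_box E\<^sub>\<psi> V (\<psi> j)"
    using in_box_common_bound[of "{..<m}" V \<psi>] v\<psi> by auto
  obtain E\<^sub>h where Eh: "in_box E\<^sub>h V h" using vars_in_imp_in_box[OF vh] by blast
  define E where "E = max E\<^sub>\<psi> E\<^sub>h"
  have E\<psi>': "\<forall>j<m. in_box E V (\<psi> j)"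
    using E\<psi> in_box_mono[of E\<^sub>\<psi> V _ E] by (simp add: E_def)
  have Eh': "in_box E V h"
    using in_box_mono[OF Eh, of E] by (simp add: E_def)
  obtain q where q: "in_box q V Q" using vars_in_imp_in_box[OF vQ] by blast
  obtain D where D: "(E * (m * D) + q + 1) ^ card V < (D + 1) ^ m + (E * (m * D) + 1) ^ card V"
    using box_count_inequality[OF V(2)] by blast
  define L where "L = m * D"
  \<comment> \<open>The monomials of degree at most \<open>L\<close> in \<open>\<psi>/h\<close>, homogenized by powers of \<open>h\<close>.\<close>
  define g where "g a = (\<Prod>j<m. \<psi> j ^ a j) * h ^ (L - (\<Sum>j<m. a j))" for a
  have deg: "(\<Sum>j<m. a j) \<le> L" if "a \<in> exponent_box D m" for a
    using sum_bounded_above[of "{..<m}" a D] that by (auto simp: exponent_box_def L_def)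
  have g_box: "in_box (E * L) V (g a)" if "a \<in> exponent_box D m" for a
    unfolding g_def using E\<psi>' Eh' deg[OF that] by (rule in_box_homogenized_monomial)
  have count: "(E * L + q + 1) ^ card V < card (exponent_box D m) + (E * L + 1) ^ card V"
    using D by (simp add: exponent_box_card L_def add.commute)
  obtain c where c: "\<exists>a\<in>exponent_box D m. c a \<noteq> 0"
    and dvd: "Q dvd (\<Sum>a\<in>exponent_box D m. mconst (c a) * g a)"
    using exists_combination_dvd[where S = "exponent_box D m" and g = g,
        OF exponent_box_finite V(1) g_box q Q0 count] by blast
  show ?thesis
  proof (intro exI conjI allI impI)
    show "finite (exponent_box D m)" by (rule exponent_box_finite)
    show "\<forall>a\<in>exponent_box D m. \<forall>i\<ge>m. a i = 0" by (simp add: exponent_box_def)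
    show "\<exists>a\<in>exponent_box D m. c a \<noteq> 0" by (rule c)
    fix y assume Qy: "insertion y Q = 0" and hy: "insertion y h \<noteq> 0"
    let ?H = "insertion y h"
    have "insertion y (\<Sum>a\<in>exponent_box D m. mconst (c a) * g a) = 0"
      using dvd Qy by (auto simp: insertion_mult elim!: dvdE)
    moreover have "insertion y (g a) = ?H ^ L * (\<Prod>i<m. (insertion y (\<psi> i) / ?H) ^ a i)"
      if "a \<in> exponent_box D m" for a
      using prod_power_homogenize[OF hy deg[OF that]]
      by (simp add: g_def insertion_mult insertion_prod insertion_power)
    then have "insertion y (\<Sum>a\<in>exponent_box D m. mconst (c a) * g a)
        = ?H ^ L * (\<Sum>a\<in>exponent_box D m. c a * (\<Prod>i<m. (insertion y (\<psi> i) / ?H) ^ a i))"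
      unfolding insertion_sum sum_distrib_left
      by (intro sum.cong refl) (simp add: insertion_mult mult.left_commute)
    ultimately have "?H ^ L * (\<Sum>a\<in>exponent_box D m. c a * (\<Prod>i<m. (insertion y (\<psi> i) / ?H) ^ a i)) = 0"
      by simp
    then show "(\<Sum>a\<in>exponent_box D m. c a * (\<Prod>i<m. (insertion y (\<psi> i) / ?H) ^ a i)) = 0"
      using hy by simp
  qed
qed

section \<open>Zariski open sets of generic parameters\<close>

lemma zariski_open_nonvanishing_polyfun:
  fixes c :: "(nat \<Rightarrow> nat) \<Rightarrow> complex"
  assumes fin: "finite A" and supp: "\<forall>a\<in>A. \<forall>i\<ge>m. a i = 0" and nz: "\<exists>a\<in>A. c a \<noteq> 0"
  defines "U \<equiv> {z \<in> cvec m. (\<Sum>a\<in>A. c a * (\<Prod>i<m. z i ^ a i)) \<noteq> 0}"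
  shows "zariski_open m U" and "U \<noteq> {}"
proof -
  define p where "p = (\<lambda>z :: nat \<Rightarrow> complex. \<Sum>a\<in>A. c a * (\<Prod>i<m. z i ^ a i))"
  have "poly_fun m p"
    unfolding poly_fun_def p_def using fin supp by (intro exI[of _ A] exI[of _ c]) simp
  then show "zariski_open m U"
    unfolding zariski_open_def U_def by (intro exI[of _ "{p}"]) (auto simp: p_def)
  have "\<not> (\<forall>z. p z = 0)"
  proof
    assume "\<forall>z. p z = 0"
    then have "\<forall>a\<in>A. c a = 0"
      using multivariate_polyfun_eq_0[OF fin supp] by (simp add: p_def)
    with nz show False by blast
  qed
  then obtain z where z: "p z \<noteq> 0" by blast
  define z' where "z' i = (if i < m then z i else 0)" for i
  have "p z' = p z"
    unfolding p_def z'_def by (intro sum.cong refl prod.cong) auto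
  then have "z' \<in> U"
    using z by (simp add: U_def p_def cvec_def z'_def)
  then show "U \<noteq> {}" by blast
qed

lemma generic_nondeg_from_parametrization:
  fixes G :: "(nat \<Rightarrow> complex) \<Rightarrow> (nat \<Rightarrow> complex) \<Rightarrow> (nat \<Rightarrow> complex)"
    and \<psi> :: "nat \<Rightarrow> mpoly" and h Q :: mpoly
  assumes "finite V" "card V \<le> m"
    and "\<forall>j<m. vars_in V (\<psi> j)" "vars_in V h" "vars_in V Q" "Q \<noteq> 0"
    and degenerate_in_image: "\<And>\<alpha> x. \<alpha> \<in> cvec m \<Longrightarrow> x \<in> torus n \<Longrightarrow> \<forall>i<t. G \<alpha> x i = 0 \<Longrightarrow>
        \<not> full_row_rank t n (jac G \<alpha> x) \<Longrightarrow>
        \<exists>y. insertion y Q = 0 \<and> insertion y h \<noteq> 0 \<and> (\<forall>j<m. \<alpha> j = insertion y (\<psi> j) / insertion y h)"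
  shows "\<exists>U. zariski_open m U \<and> U \<noteq> {} \<and>
    (\<forall>\<alpha>\<in>U. \<forall>x\<in>torus n. (\<forall>i<t. G \<alpha> x i = 0) \<longrightarrow> nondeg_sol t n G \<alpha> x)"
proof -
  obtain A c where "finite A \<and> (\<forall>a\<in>A. \<forall>i\<ge>m. a i = 0) \<and> (\<exists>a\<in>A. c a \<noteq> 0) \<and>
     (\<forall>y. insertion y Q = 0 \<longrightarrow> insertion y h \<noteq> 0 \<longrightarrow>
        (\<Sum>a\<in>A. c a * (\<Prod>i<m. (insertion y (\<psi> i) / insertion y h) ^ a i)) = 0)"
    using rational_functions_dependent_on_hypersurface[OF assms(1-6)] by (elim exE)
  then have A: "finite A" "\<forall>a\<in>A. \<forall>i\<ge>m. a i = 0" "\<exists>a\<in>A. c a \<noteq> 0"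
    and relation: "\<And>y. insertion y Q = 0 \<Longrightarrow> insertion y h \<noteq> 0 \<Longrightarrow>
        (\<Sum>a\<in>A. c a * (\<Prod>i<m. (insertion y (\<psi> i) / insertion y h) ^ a i)) = 0"
    by blast+
  define U where "U = {z \<in> cvec m. (\<Sum>a\<in>A. c a * (\<Prod>i<m. z i ^ a i)) \<noteq> 0}"
  have "nondeg_sol t n G \<alpha> x" if \<alpha>: "\<alpha> \<in> U" and x: "x \<in> torus n" and sol: "\<forall>i<t. G \<alpha> x i = 0" for \<alpha> x
  proof (rule ccontr)
    assume "\<not> nondeg_sol t n G \<alpha> x"
    then have degenerate: "\<not> full_row_rank t n (jac G \<alpha> x)"
      using x sol by (simp add: nondeg_sol_def)
    have "\<alpha> \<in> cvec m" using \<alpha> by (simp add: U_def)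
    then obtain y where y: "insertion y Q = 0" "insertion y h \<noteq> 0"
      and \<alpha>y: "\<forall>j<m. \<alpha> j = insertion y (\<psi> j) / insertion y h"
      using degenerate_in_image[OF _ x sol degenerate] by blast
    have "(\<Prod>i<m. \<alpha> i ^ a i) = (\<Prod>i<m. (insertion y (\<psi> i) / insertion y h) ^ a i)" for a
      using \<alpha>y by (intro prod.cong) auto
    then have "(\<Sum>a\<in>A. c a * (\<Prod>i<m. \<alpha> i ^ a i)) = 0" using relation[OF y] by simp
    then show False using \<alpha> by (simp add: U_def)
  qed
  moreover have "zariski_open m U" "U \<noteq> {}"
    using zariski_open_nonvanishing_polyfun[OF A] by (simp_all add: U_def)
  ultimately show ?thesis by blast
qed

section \<open>Linear algebra\<close>

definition full_row_rank_on :: "nat \<Rightarrow> nat set \<Rightarrow> (nat \<Rightarrow> nat \<Rightarrow> complex) \<Rightarrow> bool" where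
  "full_row_rank_on s C N \<longleftrightarrow> (\<forall>a. (\<forall>j\<in>C. (\<Sum>i<s. a i * N i j) = 0) \<longrightarrow> (\<forall>i<s. a i = 0))"

definition pivot_eliminate :: "(nat \<Rightarrow> nat \<Rightarrow> complex) \<Rightarrow> nat \<Rightarrow> nat \<Rightarrow> nat \<Rightarrow> nat \<Rightarrow> complex" where
  "pivot_eliminate N s j0 i j = N i j - N i j0 * N s j / N s j0"

lemma full_row_rank_on_pivot:
  assumes "full_row_rank_on (Suc s) C N"
  obtains j0 where "j0 \<in> C" and "N s j0 \<noteq> 0"
proof -
  have "\<exists>j0\<in>C. N s j0 \<noteq> 0"
  proof (rule ccontr)
    assume "\<not> ?thesis"
    then have "\<forall>j\<in>C. (\<Sum>i<Suc s. (if i = s then 1 else 0) * N i j) = 0" by simp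
    then have "\<forall>i<Suc s. (if i = s then 1 else (0::complex)) = 0"
      using assms[unfolded full_row_rank_on_def, THEN spec[of _ "\<lambda>i. if i = s then 1 else 0"]]
      by blast
    then show False by auto
  qed
  with that show ?thesis by blast
qed

lemma full_row_rank_on_pivot_eliminate:
  assumes rank: "full_row_rank_on (Suc s) C N" and j0: "j0 \<in> C" "N s j0 \<noteq> 0"
  shows "full_row_rank_on s (C - {j0}) (pivot_eliminate N s j0)"
  unfolding full_row_rank_on_def
proof (rule allI, rule impI)
  fix a assume a: "\<forall>j\<in>C - {j0}. (\<Sum>i<s. a i * pivot_eliminate N s j0 i j) = 0"
  define a' where "a' = a(s := - (\<Sum>i<s. a i * N i j0) / N s j0)"
  have lift: "(\<Sum>i<Suc s. a' i * N i j) = (\<Sum>i<s. a i * pivot_eliminate N s j0 i j)" for j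
  proof -
    have "(\<Sum>i<Suc s. a' i * N i j) = (\<Sum>i<s. a i * N i j) - (\<Sum>i<s. a i * N i j0) / N s j0 * N s j"
      by (simp add: a'_def)
    also have "(\<Sum>i<s. a i * N i j0) / N s j0 * N s j = (\<Sum>i<s. a i * N i j0 * N s j / N s j0)"
      by (simp add: sum_distrib_right sum_divide_distrib)
    also have "(\<Sum>i<s. a i * N i j) - \<dots> = (\<Sum>i<s. a i * pivot_eliminate N s j0 i j)"
      by (simp add: pivot_eliminate_def right_diff_distrib sum_subtractf mult.assoc)
    finally show ?thesis .
  qed
  have "(\<Sum>i<Suc s. a' i * N i j) = 0" if "j \<in> C" for j
  proof (cases "j = j0")
    case True
    then show ?thesis
      unfolding lift using j0(2) by (simp add: pivot_eliminate_def)
  next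
    case False
    then show ?thesis
      unfolding lift using a that by simp
  qed
  then have all: "\<forall>i<Suc s. a' i = 0"
    using rank by (simp add: full_row_rank_on_def)
  show "\<forall>i<s. a i = 0"
  proof (intro allI impI)
    fix i assume i: "i < s"
    then have "a' i = 0" using all by simp
    with i show "a i = 0" by (simp add: a'_def)
  qed
qed

lemma kernel_pivot_eliminate:
  assumes C: "finite C" "j0 \<in> C" and piv: "N s j0 \<noteq> 0"
    and v: "\<forall>i<Suc s. (\<Sum>j\<in>C. N i j * v j) = 0"
  shows "v j0 = - (\<Sum>j\<in>C - {j0}. N s j * v j) / N s j0"
    and "\<forall>i<s. (\<Sum>j\<in>C - {j0}. pivot_eliminate N s j0 i j * v j) = 0"
proof -
  have split: "(\<Sum>j\<in>C. g j) = g j0 + (\<Sum>j\<in>C - {j0}. g j)" for g :: "nat \<Rightarrow> complex"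
    using C by (simp add: sum.remove)
  have "N s j0 * v j0 + (\<Sum>j\<in>C - {j0}. N s j * v j) = 0"
    using v split[of "\<lambda>j. N s j * v j"] by auto
  then have "v j0 * N s j0 = - (\<Sum>j\<in>C - {j0}. N s j * v j)"
    by (simp add: eq_neg_iff_add_eq_0 mult.commute)
  then show vj0: "v j0 = - (\<Sum>j\<in>C - {j0}. N s j * v j) / N s j0"
    using piv by (metis minus_divide_left nonzero_mult_div_cancel_right)
  show "\<forall>i<s. (\<Sum>j\<in>C - {j0}. pivot_eliminate N s j0 i j * v j) = 0"
  proof (intro allI impI)
    fix i assume i: "i < s"
    have "(\<Sum>j\<in>C - {j0}. pivot_eliminate N s j0 i j * v j)
        = (\<Sum>j\<in>C - {j0}. N i j * v j - N i j0 / N s j0 * (N s j * v j))"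
      by (intro sum.cong refl) (simp add: pivot_eliminate_def left_diff_distrib)
    also have "\<dots> = (\<Sum>j\<in>C - {j0}. N i j * v j) - N i j0 / N s j0 * (\<Sum>j\<in>C - {j0}. N s j * v j)"
      by (simp add: sum_subtractf sum_distrib_left)
    also have "\<dots> = (\<Sum>j\<in>C - {j0}. N i j * v j) + N i j0 * v j0"
      using piv by (simp add: vj0)
    also have "\<dots> = (\<Sum>j\<in>C. N i j * v j)"
      using split[of "\<lambda>j. N i j * v j"] by simp
    finally show "(\<Sum>j\<in>C - {j0}. pivot_eliminate N s j0 i j * v j) = 0"
      using v i by simp
  qed
qed

lemma kernel_coordinates:
  assumes "finite C" and "full_row_rank_on s C N"
  shows "\<exists>I \<phi>. I \<subseteq> C \<and> card I + s = card C \<and>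
    (\<forall>v. (\<forall>i<s. (\<Sum>j\<in>C. N i j * v j) = 0) \<longrightarrow> (\<forall>l\<in>C. v l = (\<Sum>k\<in>I. \<phi> l k * v k)))"
  using assms
proof (induction s arbitrary: N C)
  case 0
  have "v l = (\<Sum>k\<in>C. (if l = k then 1 else 0) * v k)" if "l \<in> C" for v :: "nat \<Rightarrow> complex" and l
  proof -
    have "(\<Sum>k\<in>C. (if l = k then 1 else 0) * v k) = (\<Sum>k\<in>C. if l = k then v k else 0)"
      by (rule sum.cong) auto
    then show ?thesis using that 0(1) by simp
  qed
  then show ?case
    by (intro exI[of _ C] exI[of _ "\<lambda>l k. if l = k then 1 else 0"]) auto
next
  case (Suc s)
  obtain j0 where j0: "j0 \<in> C" "N s j0 \<noteq> 0"
    using full_row_rank_on_pivot[OF Suc.prems(2)] by blast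
  let ?C' = "C - {j0}"
  obtain I \<phi>' where I: "I \<subseteq> ?C'" "card I + s = card ?C'"
    and \<phi>': "\<And>v. \<forall>i<s. (\<Sum>j\<in>?C'. pivot_eliminate N s j0 i j * v j) = 0 \<Longrightarrow>
      \<forall>l\<in>?C'. v l = (\<Sum>k\<in>I. \<phi>' l k * v k)"
    using Suc.IH[of ?C' "pivot_eliminate N s j0"] Suc.prems j0
      full_row_rank_on_pivot_eliminate by blast
  define \<phi> where "\<phi> l k = (if l = j0 then - (\<Sum>j\<in>?C'. N s j * \<phi>' j k) / N s j0 else \<phi>' l k)" for l k
  have "v l = (\<Sum>k\<in>I. \<phi> l k * v k)"
    if v: "\<forall>i<Suc s. (\<Sum>j\<in>C. N i j * v j) = 0" and l: "l \<in> C" for v l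
  proof -
    note elim = kernel_pivot_eliminate[OF Suc.prems(1) j0 v]
    have vC': "\<forall>l\<in>?C'. v l = (\<Sum>k\<in>I. \<phi>' l k * v k)"
      using \<phi>' elim(2) by blast
    show ?thesis
    proof (cases "l = j0")
      case True
      have "(\<Sum>j\<in>?C'. N s j * v j) = (\<Sum>j\<in>?C'. \<Sum>k\<in>I. N s j * \<phi>' j k * v k)"
        using vC' by (simp add: sum_distrib_left mult.assoc)
      also have "\<dots> = (\<Sum>k\<in>I. (\<Sum>j\<in>?C'. N s j * \<phi>' j k) * v k)"
        by (subst sum.swap) (simp add: sum_distrib_right)
      finally have "v j0 = - (\<Sum>k\<in>I. (\<Sum>j\<in>?C'. N s j * \<phi>' j k) * v k) / N s j0"
        using elim(1) by simp
      also have "\<dots> = (\<Sum>k\<in>I. - ((\<Sum>j\<in>?C'. N s j * \<phi>' j k) * v k) / N s j0)"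
        by (simp only: sum_negf[symmetric] sum_divide_distrib)
      also have "\<dots> = (\<Sum>k\<in>I. \<phi> j0 k * v k)"
        by (intro sum.cong refl) (simp add: \<phi>_def)
      finally show ?thesis
        using True by simp
    next
      case False
      then show ?thesis using vC' l by (simp add: \<phi>_def)
    qed
  qed
  moreover have "I \<subseteq> C" and "card I + Suc s = card C"
    using I j0(1) Suc.prems(1) card_gt_0_iff[of C] by (auto simp: card_Diff_singleton)
  ultimately show ?case
    by (intro exI[of _ I] exI[of _ \<phi>]) auto
qed

lemma full_row_rank_kernel_coordinates:
  assumes "full_row_rank s r N"
  obtains I \<phi> where "I \<subseteq> {..<r}" and "card I + s = r"
    and "\<forall>v. (\<forall>i<s. (\<Sum>j<r. N i j * v j) = 0) \<longrightarrow> (\<forall>l<r. v l = (\<Sum>k\<in>I. \<phi> l k * v k))"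
proof -
  have "full_row_rank_on s {..<r} N"
    using assms by (simp add: full_row_rank_def full_row_rank_on_def)
  from kernel_coordinates[OF finite_lessThan this] obtain I \<phi> where I: "I \<subseteq> {..<r}" "card I + s = r"
    and "\<forall>v. (\<forall>i<s. (\<Sum>j\<in>{..<r}. N i j * v j) = 0) \<longrightarrow> (\<forall>l\<in>{..<r}. v l = (\<Sum>k\<in>I. \<phi> l k * v k))"
    by auto
  then show ?thesis
    using that[OF I] by (simp add: Ball_def)
qed

lemma full_row_rank_iff_mult_vec:
  "full_row_rank n n M \<longleftrightarrow>
    (\<forall>v\<in>carrier_vec n. mat n n (\<lambda>(j, i). M i j) *\<^sub>v v = 0\<^sub>v n \<longrightarrow> v = 0\<^sub>v n)"
  (is "_ \<longleftrightarrow> (\<forall>v\<in>carrier_vec n. ?A *\<^sub>v v = 0\<^sub>v n \<longrightarrow> v = 0\<^sub>v n)")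
proof -
  have Av: "?A *\<^sub>v vec n a = vec n (\<lambda>j. \<Sum>i<n. a i * M i j)" for a
    by (auto simp: scalar_prod_def mult.commute atLeast0LessThan intro!: sum.cong)
  show ?thesis
  proof
    assume frr: "full_row_rank n n M"
    show "\<forall>v\<in>carrier_vec n. ?A *\<^sub>v v = 0\<^sub>v n \<longrightarrow> v = 0\<^sub>v n"
    proof (intro ballI impI)
      fix v :: "complex vec" assume v: "v \<in> carrier_vec n" "?A *\<^sub>v v = 0\<^sub>v n"
      have "v = vec n (\<lambda>i. v $ i)"
        using v(1) by (intro eq_vecI) auto
      then have Mv: "vec n (\<lambda>j. \<Sum>i<n. v $ i * M i j) = 0\<^sub>v n"
        using Av[of "\<lambda>i. v $ i"] v(2) by simp
      have "(\<Sum>i<n. v $ i * M i j) = 0" if "j < n" for j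
        using arg_cong[OF Mv, of "\<lambda>w. w $ j"] that by simp
      then have "\<forall>i<n. v $ i = 0"
        using frr[unfolded full_row_rank_def, THEN spec[of _ "\<lambda>i. v $ i"]] by blast
      then show "v = 0\<^sub>v n"
        using v(1) by (intro eq_vecI) auto
    qed
  next
    assume inj: "\<forall>v\<in>carrier_vec n. ?A *\<^sub>v v = 0\<^sub>v n \<longrightarrow> v = 0\<^sub>v n"
    show "full_row_rank n n M"
      unfolding full_row_rank_def
    proof (rule allI, rule impI)
      fix a assume "\<forall>j<n. (\<Sum>i<n. a i * M i j) = 0"
      then have "?A *\<^sub>v vec n a = 0\<^sub>v n"
        by (auto simp: Av intro!: eq_vecI)
      then have a0: "vec n a = 0\<^sub>v n"
        using inj by simp
      show "\<forall>i<n. a i = 0"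
      proof (intro allI impI)
        fix i assume "i < n"
        with arg_cong[OF a0, of "\<lambda>w. w $ i"] show "a i = 0" by simp
      qed
    qed
  qed
qed

lemma full_row_rank_square_iff_det:
  "full_row_rank n n M \<longleftrightarrow> det (mat n n (\<lambda>(i, j). M i j)) \<noteq> 0"
proof -
  define A where "A = mat n n (\<lambda>(j, i). M i j)"
  have A: "A \<in> carrier_mat n n" by (simp add: A_def)
  have "A = transpose_mat (mat n n (\<lambda>(i, j). M i j))" by (auto simp: A_def)
  then have "det A = det (mat n n (\<lambda>(i, j). M i j))"
    using det_transpose[of "mat n n (\<lambda>(i, j). M i j)" n] by simp
  then show ?thesis
    using full_row_rank_iff_mult_vec[of n M] det_0_iff_vec_prod_zero[OF A] by (auto simp: A_def)
qed

section \<open>The Jacobian of the system\<close>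

lemma prod_fun_upd_split:
  fixes g :: "nat \<Rightarrow> complex \<Rightarrow> complex"
  assumes "j < n"
  shows "(\<Prod>k<n. g k ((x(j:=z)) k)) = g j z * (\<Prod>k\<in>{..<n}-{j}. g k (x k))"
proof -
  have "(\<Prod>k<n. g k ((x(j:=z)) k)) = g j ((x(j:=z)) j) * (\<Prod>k\<in>{..<n}-{j}. g k ((x(j:=z)) k))"
    using assms by (subst prod.remove[of "{..<n}" j]) auto
  also have "(\<Prod>k\<in>{..<n}-{j}. g k ((x(j:=z)) k)) = (\<Prod>k\<in>{..<n}-{j}. g k (x k))"
    by (intro prod.cong) auto
  finally show ?thesis by simp
qed

lemma sum_fun_upd_split:
  fixes g :: "nat \<Rightarrow> complex \<Rightarrow> complex"
  assumes "j < n"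
  shows "(\<Sum>k<n. g k ((x(j:=z)) k)) = g j z + (\<Sum>k\<in>{..<n}-{j}. g k (x k))"
proof -
  have "(\<Sum>k<n. g k ((x(j:=z)) k)) = g j ((x(j:=z)) j) + (\<Sum>k\<in>{..<n}-{j}. g k ((x(j:=z)) k))"
    using assms by (subst sum.remove[of "{..<n}" j]) auto
  also have "(\<Sum>k\<in>{..<n}-{j}. g k ((x(j:=z)) k)) = (\<Sum>k\<in>{..<n}-{j}. g k (x k))"
    by (intro sum.cong) auto
  finally show ?thesis by simp
qed

text \<open>The Jacobian of \<open>Fsys\<close> multiplied on the right by \<open>diag x\<close>; on the torus it is a
  polynomial in \<open>\<kappa> \<circ> x\<^sup>B\<close> and \<open>x\<close>.\<close>

definition toric_jacobian :: "nat \<Rightarrow> nat \<Rightarrow> nat \<Rightarrow> (nat \<Rightarrow> nat \<Rightarrow> complex) \<Rightarrow> (nat \<Rightarrow> nat \<Rightarrow> complex)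
    \<Rightarrow> (nat \<Rightarrow> nat \<Rightarrow> int) \<Rightarrow> (nat \<Rightarrow> complex) \<Rightarrow> (nat \<Rightarrow> complex) \<Rightarrow> nat \<Rightarrow> nat \<Rightarrow> complex" where
  "toric_jacobian s r n N W B \<kappa> x i j =
    (if i < s then (\<Sum>l<r. N i l * (of_int (B j l) * (\<kappa> l * monvec n B x l))) else W (i - s) j * x j)"

lemma deriv_Fsys_f_row:
  assumes x: "x \<in> torus n" and j: "j < n" and i: "i < s"
  shows "deriv (\<lambda>z. Fsys s d r n N W B \<kappa> c (x(j := z)) i) (x j) * x j
    = toric_jacobian s r n N W B \<kappa> x i j"
proof -
  have xj: "x j \<noteq> 0" using x j by (auto simp: torus_def)
  define P where "P l = (\<Prod>k\<in>{..<n} - {j}. x k powi B k l)" for l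
  have mv: "monvec n B (x(j := z)) l = z powi B j l * P l" for z l
    unfolding monvec_def P_def by (rule prod_fun_upd_split[OF j, of "\<lambda>k w. w powi B k l"])
  have e1: "x j powi (B j l - 1) * x j = x j powi B j l" for l
    using power_int_add[of "x j" "B j l - 1" 1] xj by simp
  have e2: "monvec n B x l = x j powi B j l * P l" for l
    using mv[of "x j" l] by simp
  have eq: "(\<lambda>z. Fsys s d r n N W B \<kappa> c (x(j := z)) i) = (\<lambda>z. \<Sum>l<r. N i l * (\<kappa> l * (P l * z powi B j l)))"
    by (rule ext) (simp add: Fsys_def fsys_def i mv mult.commute)
  have "((\<lambda>z. \<Sum>l<r. N i l * (\<kappa> l * (P l * z powi B j l))) has_field_derivative
      (\<Sum>l<r. N i l * (\<kappa> l * (P l * (of_int (B j l) * x j powi (B j l - 1) * 1))))) (at (x j))"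
    by (intro DERIV_sum DERIV_cmult DERIV_power_int DERIV_ident) (use xj in auto)
  then have "deriv (\<lambda>z. Fsys s d r n N W B \<kappa> c (x(j := z)) i) (x j) =
      (\<Sum>l<r. N i l * (\<kappa> l * (P l * (of_int (B j l) * x j powi (B j l - 1) * 1))))"
    unfolding eq by (rule DERIV_imp_deriv)
  then have "deriv (\<lambda>z. Fsys s d r n N W B \<kappa> c (x(j := z)) i) (x j) * x j =
      (\<Sum>l<r. N i l * (\<kappa> l * (P l * (of_int (B j l) * (x j powi (B j l - 1) * x j)))))"
    by (simp add: sum_distrib_right mult.assoc)
  also have "\<dots> = toric_jacobian s r n N W B \<kappa> x i j"
    unfolding e1 using i by (simp add: toric_jacobian_def e2 mult_ac)
  finally show ?thesis .
qed

lemma deriv_Fsys_W_row: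
  assumes j: "j < n" and i: "s \<le> i" "i < s + d"
  shows "deriv (\<lambda>z. Fsys s d r n N W B \<kappa> c (x(j:=z)) i) (x j) = W (i - s) j"
proof -
  define S where "S = (\<Sum>k\<in>{..<n}-{j}. W (i - s) k * x k)"
  have eq: "(\<lambda>z. Fsys s d r n N W B \<kappa> c (x(j:=z)) i) = (\<lambda>z. W (i - s) j * z + S - c (i - s))"
  proof (rule ext)
    fix z
    have sW: "(\<Sum>k<n. W (i - s) k * (x(j:=z)) k) = W (i - s) j * z + S"
      using sum_fun_upd_split[OF j, of "\<lambda>k w. W (i - s) k * w" x z] by (simp only: S_def)
    show "Fsys s d r n N W B \<kappa> c (x(j:=z)) i = W (i - s) j * z + S - c (i - s)"
      using i by (simp add: Fsys_def sW del: fun_upd_apply)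
  qed
  have D: "((\<lambda>z. W (i - s) j * z + S - c (i - s)) has_field_derivative W (i - s) j * 1 + 0 - 0) (at (x j))"
    by (intro DERIV_diff DERIV_add DERIV_cmult DERIV_ident DERIV_const)
  show ?thesis unfolding eq using DERIV_imp_deriv[OF D] by simp
qed

lemma full_row_rank_Fsys_jacobian_iff:
  assumes x: "x \<in> torus n" and nsd: "n = s + d"
  shows "full_row_rank (s + d) n (\<lambda>i j. deriv (\<lambda>z. Fsys s d r n N W B \<kappa> c (x(j := z)) i) (x j)) \<longleftrightarrow>
    det (mat n n (\<lambda>(i, j). toric_jacobian s r n N W B \<kappa> x i j)) \<noteq> 0"
proof -
  define J where "J i j = deriv (\<lambda>z. Fsys s d r n N W B \<kappa> c (x(j := z)) i) (x j)" for i j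
  have xnz: "\<And>j. j < n \<Longrightarrow> x j \<noteq> 0" using x by (auto simp: torus_def)
  have JM: "toric_jacobian s r n N W B \<kappa> x i j = J i j * x j" if "i < n" "j < n" for i j
    using deriv_Fsys_f_row[OF x that(2)] deriv_Fsys_W_row[OF that(2), of s i d] that nsd
    by (cases "i < s") (auto simp: J_def toric_jacobian_def)
  have "(\<Sum>i<n. a i * toric_jacobian s r n N W B \<kappa> x i j) = (\<Sum>i<n. a i * J i j) * x j"
    if "j < n" for a j
    using JM that by (simp add: sum_distrib_right mult.assoc)
  then have "full_row_rank (s + d) n J \<longleftrightarrow> full_row_rank n n (toric_jacobian s r n N W B \<kappa> x)"
    using xnz unfolding full_row_rank_def nsd by auto
  then show ?thesis
    unfolding J_def full_row_rank_square_iff_det by simp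
qed

lemma Fsys_eq_0_rows:
  assumes "\<forall>i<s + d. Fsys s d r n N W B \<kappa> c x i = 0"
  shows "\<forall>i<s. (\<Sum>j<r. N i j * (\<kappa> j * monvec n B x j)) = 0"
    and "\<forall>k<d. (\<Sum>i<n. W k i * x i) = c k"
proof -
  show "\<forall>i<s. (\<Sum>j<r. N i j * (\<kappa> j * monvec n B x j)) = 0"
  proof (intro allI impI)
    fix i assume "i < s"
    then show "(\<Sum>j<r. N i j * (\<kappa> j * monvec n B x j)) = 0"
      using assms[rule_format, of i] by (simp add: Fsys_def fsys_def)
  qed
  show "\<forall>k<d. (\<Sum>i<n. W k i * x i) = c k"
  proof (intro allI impI)
    fix k assume "k < d"
    then show "(\<Sum>i<n. W k i * x i) = c k"
      using assms[rule_format, of "s + k"] by (simp add: Fsys_def)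
  qed
qed

lemma jac_eq: "jac G \<alpha> x = (\<lambda>i j. deriv (\<lambda>z. G \<alpha> (x(j := z)) i) (x j))"
  by (simp add: jac_def fun_eq_iff)

section \<open>Polynomial parametrization of the degenerate parameters\<close>

definition det_mpoly :: "nat \<Rightarrow> (nat \<Rightarrow> nat \<Rightarrow> mpoly) \<Rightarrow> mpoly" where
  "det_mpoly n M = (\<Sum>p\<in>{p. p permutes {0..<n}}. mconst (of_int (sign p)) * (\<Prod>i=0..<n. M i (p i)))"

lemma insertion_det_mpoly:
  "insertion y (det_mpoly n M) = det (mat n n (\<lambda>(i, j). insertion y (M i j)))"
proof -
  have "(\<Prod>i=0..<n. mat n n (\<lambda>(i, j). insertion y (M i j)) $$ (i, p i)) = (\<Prod>i=0..<n. insertion y (M i (p i)))"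
    if "p permutes {0..<n}" for p
    using permutes_in_image[OF that] by (intro prod.cong) auto
  then show ?thesis
    by (simp add: det_mpoly_def Determinant.det_def insertion_sum insertion_mult insertion_prod)
qed

lemma vars_in_det_mpoly:
  assumes "\<And>i j. i < n \<Longrightarrow> j < n \<Longrightarrow> vars_in V (M i j)"
  shows "vars_in V (det_mpoly n M)"
  unfolding det_mpoly_def
proof (intro vars_in_sum vars_in_mult vars_in_mconst vars_in_prod)
  fix p i assume "p \<in> {p. p permutes {0..<n}}" "i \<in> {0..<n}"
  then have "i < n" "p i < n" using permutes_in_image[of p "{0..<n}" i] by auto
  then show "vars_in V (M i (p i))" by (rule assms)
qed

text \<open>Polynomials in variables \<open>Y\<^sub>k\<close>: \<open>kernel_mpoly \<phi> I l\<close> is the \<open>l\<close>-th entry of the point of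
  \<open>ker N\<close> with coordinates \<open>Y\<^sub>I\<close>, and \<open>X i\<close> is a polynomial giving the \<open>i\<close>-th coordinate of \<open>x\<close>.
  Since \<open>v = \<kappa> \<circ> x\<^sup>B\<close>, the parameter \<open>\<kappa>\<^sub>l\<close> is the quotient \<open>kappa_mpoly l / denom_mpoly\<close>, the
  exponent \<open>E\<close> being large enough to clear all negative powers of \<open>x\<close>.\<close>

definition kernel_mpoly :: "(nat \<Rightarrow> nat \<Rightarrow> complex) \<Rightarrow> nat set \<Rightarrow> nat \<Rightarrow> mpoly" where
  "kernel_mpoly \<phi> I l = (\<Sum>k\<in>I. mconst (\<phi> l k) * mvar k)"

definition denom_mpoly :: "nat \<Rightarrow> nat \<Rightarrow> (nat \<Rightarrow> mpoly) \<Rightarrow> mpoly" where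
  "denom_mpoly n E X = (\<Prod>i<n. X i) ^ E"

definition kappa_mpoly :: "nat \<Rightarrow> (nat \<Rightarrow> nat \<Rightarrow> int) \<Rightarrow> nat \<Rightarrow> (nat \<Rightarrow> nat \<Rightarrow> complex) \<Rightarrow> nat set
    \<Rightarrow> (nat \<Rightarrow> mpoly) \<Rightarrow> nat \<Rightarrow> mpoly" where
  "kappa_mpoly n B E \<phi> I X l = kernel_mpoly \<phi> I l * (\<Prod>i<n. X i ^ nat (int E - B i l))"

definition jacobian_mpoly :: "nat \<Rightarrow> nat \<Rightarrow> (nat \<Rightarrow> nat \<Rightarrow> complex) \<Rightarrow> (nat \<Rightarrow> nat \<Rightarrow> complex)
    \<Rightarrow> (nat \<Rightarrow> nat \<Rightarrow> int) \<Rightarrow> (nat \<Rightarrow> nat \<Rightarrow> complex) \<Rightarrow> nat set \<Rightarrow> (nat \<Rightarrow> mpoly) \<Rightarrow> nat \<Rightarrow> nat \<Rightarrow> mpoly" where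
  "jacobian_mpoly s r N W B \<phi> I X i j =
    (if i < s then (\<Sum>l<r. mconst (N i l * of_int (B j l)) * kernel_mpoly \<phi> I l)
     else mconst (W (i - s) j) * X j)"

lemma vars_in_kernel_mpoly: "I \<subseteq> V \<Longrightarrow> vars_in V (kernel_mpoly \<phi> I l)"
  unfolding kernel_mpoly_def by (intro vars_in_sum vars_in_mult vars_in_mconst vars_in_mvar) auto

lemma vars_in_denom_mpoly: "(\<And>i. i < n \<Longrightarrow> vars_in V (X i)) \<Longrightarrow> vars_in V (denom_mpoly n E X)"
  unfolding denom_mpoly_def by (intro vars_in_power vars_in_prod) auto

lemma vars_in_kappa_mpoly:
  "I \<subseteq> V \<Longrightarrow> (\<And>i. i < n \<Longrightarrow> vars_in V (X i)) \<Longrightarrow> vars_in V (kappa_mpoly n B E \<phi> I X l)"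
  unfolding kappa_mpoly_def by (intro vars_in_mult vars_in_kernel_mpoly vars_in_prod vars_in_power) auto

lemma vars_in_jacobian_mpoly:
  "I \<subseteq> V \<Longrightarrow> vars_in V (X j) \<Longrightarrow> vars_in V (jacobian_mpoly s r N W B \<phi> I X i j)"
  unfolding jacobian_mpoly_def by (auto intro!: vars_in_sum vars_in_mult vars_in_mconst vars_in_kernel_mpoly)

lemma powi_mult_power_diff:
  fixes x :: complex
  assumes "x \<noteq> 0" "b \<le> int E"
  shows "x powi b * x ^ nat (int E - b) = x ^ E"
proof -
  have "x ^ nat (int E - b) = x powi (int E - b)"
    using assms(2) by (simp add: power_int_def)
  then show ?thesis
    using power_int_add[of x b "int E - b"] assms(1) by simp
qed

lemma exponent_bound:
  fixes B :: "nat \<Rightarrow> nat \<Rightarrow> int"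
  shows "\<exists>E. \<forall>i<n. \<forall>l<r. B i l \<le> int E"
proof
  show "\<forall>i<n. \<forall>l<r. B i l \<le> int (\<Sum>i<n. \<Sum>l<r. nat \<bar>B i l\<bar>)"
  proof (intro allI impI)
    fix i l assume "i < n" "l < r"
    have "nat \<bar>B i l\<bar> \<le> (\<Sum>l<r. nat \<bar>B i l\<bar>)"
      using \<open>l < r\<close> by (intro member_le_sum) auto
    also have "\<dots> \<le> (\<Sum>i<n. \<Sum>l<r. nat \<bar>B i l\<bar>)"
      using \<open>i < n\<close> by (intro member_le_sum[where f = "\<lambda>i. \<Sum>l<r. nat \<bar>B i l\<bar>"]) auto
    finally have "nat \<bar>B i l\<bar> \<le> (\<Sum>i<n. \<Sum>l<r. nat \<bar>B i l\<bar>)" .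
    then show "B i l \<le> int (\<Sum>i<n. \<Sum>l<r. nat \<bar>B i l\<bar>)" by linarith
  qed
qed

lemma insertion_Fsys_mpolys:
  fixes x y :: "nat \<Rightarrow> complex" and X :: "nat \<Rightarrow> mpoly"
  assumes x: "x \<in> torus n" and nsd: "n = s + d"
    and sol: "\<forall>i<s + d. Fsys s d r n N W B \<kappa> c x i = 0"
    and E: "\<forall>i<n. \<forall>l<r. B i l \<le> int E"
    and I: "I \<subseteq> {..<r}"
    and kerN: "\<forall>v. (\<forall>i<s. (\<Sum>j<r. N i j * v j) = 0) \<longrightarrow> (\<forall>l<r. v l = (\<Sum>k\<in>I. \<phi> l k * v k))"
    and yv: "\<forall>k<r. y k = \<kappa> k * monvec n B x k"
    and yx: "\<forall>i<n. insertion y (X i) = x i"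
  shows "insertion y (denom_mpoly n E X) \<noteq> 0"
    and "\<forall>l<r. insertion y (kappa_mpoly n B E \<phi> I X l) = \<kappa> l * insertion y (denom_mpoly n E X)"
    and "insertion y (det_mpoly n (jacobian_mpoly s r N W B \<phi> I X)) \<noteq> 0 \<longleftrightarrow>
      full_row_rank (s + d) n (\<lambda>i j. deriv (\<lambda>z. Fsys s d r n N W B \<kappa> c (x(j := z)) i) (x j))"
proof -
  have xnz: "\<And>i. i < n \<Longrightarrow> x i \<noteq> 0" using x by (auto simp: torus_def)
  have kernel: "insertion y (kernel_mpoly \<phi> I l) = \<kappa> l * monvec n B x l" if "l < r" for l
  proof -
    have "\<kappa> l * monvec n B x l = (\<Sum>k\<in>I. \<phi> l k * (\<kappa> k * monvec n B x k))"
      using kerN[rule_format, of "\<lambda>j. \<kappa> j * monvec n B x j"] Fsys_eq_0_rows(1)[OF sol] that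
      by blast
    also have "\<dots> = insertion y (kernel_mpoly \<phi> I l)"
      using I yv by (auto simp: kernel_mpoly_def insertion_sum insertion_mult intro!: sum.cong)
    finally show ?thesis ..
  qed
  have X: "(\<Prod>i<n. f (insertion y (X i)) i) = (\<Prod>i<n. f (x i) i)" for f :: "complex \<Rightarrow> nat \<Rightarrow> complex"
    using yx by (intro prod.cong) auto
  have denom: "insertion y (denom_mpoly n E X) = (\<Prod>i<n. x i) ^ E"
    using X[of "\<lambda>w i. w"] by (simp add: denom_mpoly_def insertion_power insertion_prod)
  then show "insertion y (denom_mpoly n E X) \<noteq> 0"
    using xnz by auto
  show "\<forall>l<r. insertion y (kappa_mpoly n B E \<phi> I X l) = \<kappa> l * insertion y (denom_mpoly n E X)"
  proof (intro allI impI)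
    fix l assume l: "l < r"
    have "monvec n B x l * (\<Prod>i<n. x i ^ nat (int E - B i l)) = (\<Prod>i<n. x i ^ E)"
      unfolding monvec_def prod.distrib[symmetric]
      using xnz E l by (intro prod.cong refl powi_mult_power_diff) auto
    then show "insertion y (kappa_mpoly n B E \<phi> I X l) = \<kappa> l * insertion y (denom_mpoly n E X)"
      using X[of "\<lambda>w i. w ^ nat (int E - B i l)"] kernel[OF l]
      by (simp add: kappa_mpoly_def insertion_mult insertion_prod insertion_power denom prod_power_distrib)
  qed
  have "insertion y (jacobian_mpoly s r N W B \<phi> I X i j) = toric_jacobian s r n N W B \<kappa> x i j"
    if "j < n" for i j
  proof (cases "i < s")
    case True
    then have "insertion y (jacobian_mpoly s r N W B \<phi> I X i j)
        = (\<Sum>l<r. N i l * (of_int (B j l) * insertion y (kernel_mpoly \<phi> I l)))"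
      by (simp add: jacobian_mpoly_def insertion_sum insertion_mult mult.assoc)
    also have "\<dots> = (\<Sum>l<r. N i l * (of_int (B j l) * (\<kappa> l * monvec n B x l)))"
      by (intro sum.cong refl) (simp add: kernel)
    also have "\<dots> = toric_jacobian s r n N W B \<kappa> x i j"
      using True by (simp add: toric_jacobian_def)
    finally show ?thesis .
  next
    case False
    then show ?thesis
      using that yx by (simp add: jacobian_mpoly_def toric_jacobian_def insertion_mult)
  qed
  then have "insertion y (det_mpoly n (jacobian_mpoly s r N W B \<phi> I X))
      = det (mat n n (\<lambda>(i, j). toric_jacobian s r n N W B \<kappa> x i j))"
    unfolding insertion_det_mpoly by (intro arg_cong[where f = det] eq_matI) auto
  then show "insertion y (det_mpoly n (jacobian_mpoly s r N W B \<phi> I X)) \<noteq> 0 \<longleftrightarrow>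
      full_row_rank (s + d) n (\<lambda>i j. deriv (\<lambda>z. Fsys s d r n N W B \<kappa> c (x(j := z)) i) (x j))"
    using full_row_rank_Fsys_jacobian_iff[OF x nsd] by simp
qed

lemma generic_nondeg_Fsys_fixed_c:
  assumes nsd: "n = s + d" and rN: "full_row_rank s r N" and rW: "full_row_rank d n W"
  shows "generic_nondeg_property r (s + d) n (\<lambda>\<kappa> x. Fsys s d r n N W B \<kappa> c x)"
  unfolding generic_nondeg_property_def
proof
  let ?G = "\<lambda>\<kappa> x. Fsys s d r n N W B \<kappa> c x"
  assume "\<exists>\<alpha>\<in>cvec r. \<exists>x. nondeg_sol (s + d) n ?G \<alpha> x"
  then obtain \<kappa>\<^sub>0 x\<^sub>0 where x\<^sub>0: "x\<^sub>0 \<in> torus n" and sol\<^sub>0: "\<forall>i<s + d. ?G \<kappa>\<^sub>0 x\<^sub>0 i = 0"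
    and nondeg\<^sub>0: "full_row_rank (s + d) n (jac ?G \<kappa>\<^sub>0 x\<^sub>0)"
    by (auto simp: nondeg_sol_def)
  obtain I \<phi> where I: "I \<subseteq> {..<r}" "card I + s = r"
    and kerN: "\<forall>v. (\<forall>i<s. (\<Sum>j<r. N i j * v j) = 0) \<longrightarrow> (\<forall>l<r. v l = (\<Sum>k\<in>I. \<phi> l k * v k))"
    using full_row_rank_kernel_coordinates[OF rN] by blast
  obtain I' \<phi>' where I': "I' \<subseteq> {..<n}" "card I' + d = n"
    and kerW: "\<forall>w. (\<forall>i<d. (\<Sum>j<n. W i j * w j) = 0) \<longrightarrow> (\<forall>l<n. w l = (\<Sum>k\<in>I'. \<phi>' l k * w k))"
    using full_row_rank_kernel_coordinates[OF rW] by blast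
  obtain E where E: "\<forall>i<n. \<forall>l<r. B i l \<le> int E"
    using exponent_bound by blast
  \<comment> \<open>The variables \<open>Y\<^sub>r\<^sub>+\<^sub>k\<close>, \<open>k \<in> I'\<close>, parametrize the fibre \<open>W x = c\<close> through \<open>x\<^sub>0\<close>.\<close>
  define X where "X i = mconst (x\<^sub>0 i) + (\<Sum>k\<in>I'. mconst (\<phi>' i k) * mvar (r + k))" for i
  define V where "V = I \<union> (\<lambda>k. r + k) ` I'"
  have insertion_X: "insertion y (X i) = x\<^sub>0 i + (\<Sum>k\<in>I'. \<phi>' i k * y (r + k))" for y i
    by (simp add: X_def insertion_add insertion_sum insertion_mult)
  have vars_X: "vars_in V (X i)" for i
    unfolding X_def by (intro vars_in_add vars_in_mconst vars_in_sum vars_in_mult vars_in_mvar)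
      (auto simp: V_def)
  note insertion_mpolys = insertion_Fsys_mpolys[OF _ nsd _ E I(1) kerN]
  show "\<exists>U. zariski_open r U \<and> U \<noteq> {} \<and>
      (\<forall>\<alpha>\<in>U. \<forall>x\<in>torus n. (\<forall>i<s + d. ?G \<alpha> x i = 0) \<longrightarrow> nondeg_sol (s + d) n ?G \<alpha> x)"
  proof (rule generic_nondeg_from_parametrization[where \<psi> = "kappa_mpoly n B E \<phi> I X"
        and h = "denom_mpoly n E X" and Q = "det_mpoly n (jacobian_mpoly s r N W B \<phi> I X)"])
    show "finite V" "card V \<le> r"
      using finite_subset[OF I(1)] finite_subset[OF I'(1)] card_Un_le[of I "(\<lambda>k. r + k) ` I'"]
        card_image[of "\<lambda>k. r + k" I'] I(2) I'(2) nsd by (auto simp: V_def)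
    show "\<forall>j<r. vars_in V (kappa_mpoly n B E \<phi> I X j)" "vars_in V (denom_mpoly n E X)"
      "vars_in V (det_mpoly n (jacobian_mpoly s r N W B \<phi> I X))"
      using vars_X by (auto simp: V_def intro!: vars_in_kappa_mpoly vars_in_denom_mpoly
          vars_in_det_mpoly vars_in_jacobian_mpoly)
    define y\<^sub>0 where "y\<^sub>0 k = (if k < r then \<kappa>\<^sub>0 k * monvec n B x\<^sub>0 k else 0)" for k
    have "\<forall>k<r. y\<^sub>0 k = \<kappa>\<^sub>0 k * monvec n B x\<^sub>0 k" "\<forall>i<n. insertion y\<^sub>0 (X i) = x\<^sub>0 i"
      by (simp_all add: y\<^sub>0_def insertion_X)
    from insertion_mpolys(3)[OF x\<^sub>0 sol\<^sub>0 this] nondeg\<^sub>0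
    show "det_mpoly n (jacobian_mpoly s r N W B \<phi> I X) \<noteq> 0"
      by (auto simp: jac_eq)
  next
    fix \<alpha> x assume "\<alpha> \<in> cvec r" and x: "x \<in> torus n" and sol: "\<forall>i<s + d. ?G \<alpha> x i = 0"
      and degenerate: "\<not> full_row_rank (s + d) n (jac ?G \<alpha> x)"
    define y where "y k = (if k < r then \<alpha> k * monvec n B x k else x (k - r) - x\<^sub>0 (k - r))" for k
    have "\<forall>i<d. (\<Sum>j<n. W i j * (x j - x\<^sub>0 j)) = 0"
      using Fsys_eq_0_rows(2)[OF sol] Fsys_eq_0_rows(2)[OF sol\<^sub>0]
      by (simp add: right_diff_distrib sum_subtractf)
    from kerW[THEN spec[of _ "\<lambda>j. x j - x\<^sub>0 j"], THEN mp, OF this]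
    have fibre: "\<forall>l<n. x l - x\<^sub>0 l = (\<Sum>k\<in>I'. \<phi>' l k * (x k - x\<^sub>0 k))" .
    have yv: "\<forall>k<r. y k = \<alpha> k * monvec n B x k"
      by (simp add: y_def)
    have yx: "\<forall>i<n. insertion y (X i) = x i"
    proof (intro allI impI)
      fix i assume "i < n"
      have fi: "(\<Sum>k\<in>I'. \<phi>' i k * (x k - x\<^sub>0 k)) = x i - x\<^sub>0 i"
        using fibre[rule_format, OF \<open>i < n\<close>] by (rule sym)
      show "insertion y (X i) = x i"
        by (simp add: insertion_X y_def fi)
    qed
    note at_y = insertion_mpolys[OF x sol yv yx]
    show "\<exists>y. insertion y (det_mpoly n (jacobian_mpoly s r N W B \<phi> I X)) = 0 \<and>
        insertion y (denom_mpoly n E X) \<noteq> 0 \<and>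
        (\<forall>j<r. \<alpha> j = insertion y (kappa_mpoly n B E \<phi> I X j) / insertion y (denom_mpoly n E X))"
    proof (intro exI[of _ y] conjI allI impI)
      show "insertion y (det_mpoly n (jacobian_mpoly s r N W B \<phi> I X)) = 0"
        using at_y(3) degenerate by (simp add: jac_eq)
      show "insertion y (denom_mpoly n E X) \<noteq> 0"
        by (rule at_y(1))
      show "\<alpha> j = insertion y (kappa_mpoly n B E \<phi> I X j) / insertion y (denom_mpoly n E X)" if "j < r" for j
        using at_y(1,2) that by simp
    qed
  qed
qed

lemma generic_nondeg_Fsys:
  assumes nsd: "n = s + d" and rN: "full_row_rank s r N"
  shows "generic_nondeg_property (r + d) (s + d) n
    (\<lambda>\<alpha> x. Fsys s d r n N W B (\<lambda>j. if j < r then \<alpha> j else 0) (\<lambda>k. \<alpha> (r + k)) x)"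
  unfolding generic_nondeg_property_def
proof
  let ?\<kappa> = "\<lambda>\<alpha> j. if j < r then \<alpha> j else 0"
  let ?G = "\<lambda>\<alpha> x. Fsys s d r n N W B (?\<kappa> \<alpha>) (\<lambda>k. \<alpha> (r + k)) x"
  assume "\<exists>\<alpha>\<in>cvec (r + d). \<exists>x. nondeg_sol (s + d) n ?G \<alpha> x"
  then obtain \<alpha>\<^sub>0 x\<^sub>0 where x\<^sub>0: "x\<^sub>0 \<in> torus n" and sol\<^sub>0: "\<forall>i<s + d. ?G \<alpha>\<^sub>0 x\<^sub>0 i = 0"
    and nondeg\<^sub>0: "full_row_rank (s + d) n (jac ?G \<alpha>\<^sub>0 x\<^sub>0)"
    by (auto simp: nondeg_sol_def)
  obtain I \<phi> where I: "I \<subseteq> {..<r}" "card I + s = r"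
    and kerN: "\<forall>v. (\<forall>i<s. (\<Sum>j<r. N i j * v j) = 0) \<longrightarrow> (\<forall>l<r. v l = (\<Sum>k\<in>I. \<phi> l k * v k))"
    using full_row_rank_kernel_coordinates[OF rN] by blast
  obtain E where E: "\<forall>i<n. \<forall>l<r. B i l \<le> int E"
    using exponent_bound by blast
  \<comment> \<open>Here \<open>x\<close> itself is free: the variables \<open>Y\<^sub>r\<^sub>+\<^sub>i\<close> are its coordinates, and \<open>c = W x\<close>.\<close>
  define X where "X i = mvar (r + i)" for i
  define V where "V = I \<union> (\<lambda>k. r + k) ` {..<n}"
  define h where "h = denom_mpoly n E X"
  define \<psi> where "\<psi> j = (if j < r then kappa_mpoly n B E \<phi> I X j
    else (\<Sum>i<n. mconst (W (j - r) i) * X i) * h)" for j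
  have vars_X: "vars_in V (X i)" if "i < n" for i
    using that by (simp add: X_def V_def vars_in_mvar)
  note insertion_mpolys = insertion_Fsys_mpolys[OF _ nsd _ E I(1) kerN]
  show "\<exists>U. zariski_open (r + d) U \<and> U \<noteq> {} \<and>
      (\<forall>\<alpha>\<in>U. \<forall>x\<in>torus n. (\<forall>i<s + d. ?G \<alpha> x i = 0) \<longrightarrow> nondeg_sol (s + d) n ?G \<alpha> x)"
  proof (rule generic_nondeg_from_parametrization[where \<psi> = \<psi>
        and h = h and Q = "det_mpoly n (jacobian_mpoly s r N W B \<phi> I X)"])
    show "finite V" "card V \<le> r + d"
      using finite_subset[OF I(1)] card_Un_le[of I "(\<lambda>k. r + k) ` {..<n}"]
        card_image[of "\<lambda>k. r + k" "{..<n}"] I(2) nsd by (auto simp: V_def)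
    show "vars_in V h"
      unfolding h_def using vars_X by (rule vars_in_denom_mpoly)
    then show "\<forall>j<r + d. vars_in V (\<psi> j)"
      using vars_X by (auto simp: \<psi>_def V_def intro!: vars_in_kappa_mpoly vars_in_mult
          vars_in_sum vars_in_mconst)
    show "vars_in V (det_mpoly n (jacobian_mpoly s r N W B \<phi> I X))"
      using vars_X by (auto simp: V_def intro!: vars_in_det_mpoly vars_in_jacobian_mpoly)
    define y\<^sub>0 where "y\<^sub>0 k = (if k < r then \<alpha>\<^sub>0 k * monvec n B x\<^sub>0 k else x\<^sub>0 (k - r))" for k
    have "\<forall>k<r. y\<^sub>0 k = ?\<kappa> \<alpha>\<^sub>0 k * monvec n B x\<^sub>0 k" "\<forall>i<n. insertion y\<^sub>0 (X i) = x\<^sub>0 i"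
      by (simp_all add: y\<^sub>0_def X_def)
    from insertion_mpolys(3)[OF x\<^sub>0 sol\<^sub>0 this] nondeg\<^sub>0
    show "det_mpoly n (jacobian_mpoly s r N W B \<phi> I X) \<noteq> 0"
      by (auto simp: jac_eq)
  next
    fix \<alpha> x assume "\<alpha> \<in> cvec (r + d)" and x: "x \<in> torus n" and sol: "\<forall>i<s + d. ?G \<alpha> x i = 0"
      and degenerate: "\<not> full_row_rank (s + d) n (jac ?G \<alpha> x)"
    define y where "y k = (if k < r then \<alpha> k * monvec n B x k else x (k - r))" for k
    have "\<forall>k<r. y k = ?\<kappa> \<alpha> k * monvec n B x k" "\<forall>i<n. insertion y (X i) = x i"
      by (simp_all add: y_def X_def)
    note at_y = insertion_mpolys[OF x sol this]
    have "\<alpha> j = insertion y (\<psi> j) / insertion y h" if "j < r + d" for j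
    proof (cases "j < r")
      case True
      then show ?thesis using at_y(1,2) by (simp add: \<psi>_def h_def)
    next
      case False
      define k where "k = j - r"
      have k: "j = r + k" "k < d" using False that by (simp_all add: k_def)
      then have "(\<Sum>i<n. W k i * x i) = \<alpha> j"
        using Fsys_eq_0_rows(2)[OF sol] by simp
      moreover have "insertion y (\<psi> j) = (\<Sum>i<n. W k i * x i) * insertion y h"
        using False \<open>\<forall>i<n. insertion y (X i) = x i\<close>
        by (simp add: \<psi>_def k(1) insertion_mult insertion_sum)
      ultimately show ?thesis using at_y(1) by (simp add: h_def)
    qed
    moreover have "insertion y (det_mpoly n (jacobian_mpoly s r N W B \<phi> I X)) = 0"
      using at_y(3) degenerate by (simp add: jac_eq)
    ultimately show "\<exists>y. insertion y (det_mpoly n (jacobian_mpoly s r N W B \<phi> I X)) = 0 \<and>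
        insertion y h \<noteq> 0 \<and> (\<forall>j<r + d. \<alpha> j = insertion y (\<psi> j) / insertion y h)"
      using at_y(1) by (intro exI[of _ y]) (auto simp: h_def)
  qed
qed

theorem mainTheorem10:
  fixes s r n d :: nat
    and N :: "nat \<Rightarrow> nat \<Rightarrow> complex"
    and W :: "nat \<Rightarrow> nat \<Rightarrow> complex"
    and B :: "nat \<Rightarrow> nat \<Rightarrow> int"
  assumes "s \<le> n" and "d = n - s"
    and "full_row_rank s r N"
    and "full_row_rank d n W"
  shows
    "generic_nondeg_property (r + d) (s + d) n
       (\<lambda>\<alpha> x. Fsys s d r n N W B (\<lambda>j. if j < r then \<alpha> j else 0) (\<lambda>k. \<alpha> (r + k)) x)
     \<and> (\<forall>c\<in>cvec d. generic_nondeg_property r (s + d) n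
          (\<lambda>\<kappa> x. Fsys s d r n N W B \<kappa> c x))
     \<and> (s = n \<longrightarrow> generic_nondeg_property r s n (\<lambda>\<kappa> x. fsys s r n N B \<kappa> x))"
proof -
  have nsd: "n = s + d" using assms(1,2) by simp
  note fixed_c = generic_nondeg_Fsys_fixed_c[OF nsd assms(3,4)]
  have "generic_nondeg_property r s n (\<lambda>\<kappa> x. fsys s r n N B \<kappa> x)" if "s = n"
  proof -
    have "d = 0" using that assms(2) by simp
    moreover have "(\<lambda>\<kappa> x. fsys s r n N B \<kappa> x) = (\<lambda>\<kappa> x. Fsys s 0 r n N W B \<kappa> (\<lambda>_. 0) x)"
      by (auto simp: fun_eq_iff Fsys_def fsys_def)
    ultimately show ?thesis
      using fixed_c[where c = "\<lambda>_. 0"] by simp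
  qed
  then show ?thesis
    using generic_nondeg_Fsys[OF nsd assms(3)] fixed_c by blast
qed

end
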